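(* Let $q$ be a prime power, $G=\mathrm{PGL}_3(q)$ acting on the point set $\mathcal{P}$ of $\mathrm{PG}_2(q)$, and for $\alpha,\beta,\gamma,\delta\in\mathcal{P}$ let $$N_{(\alpha,\beta),(\gamma,\delta)}=|\{g\in G: \alpha^g=\beta,\ \gamma^g=\delta,\ g\text{ is a derangement}\}|.$$ Let $u=(q-2)q(q^2-1)/3$ and $v=(q-1)q(q^2-1)/3$. Then $N_{(\alpha,\beta),(\gamma,\delta)}$ equals: $q^2v$ if $\alpha\neq\beta$, $\alpha=\gamma$ and $\beta=\delta$; $v$ if $\alpha,\beta,\gamma,\delta$ are pairwise distinct and exactly three of them are collinear (i.e. some three are collinear but not all four); $v$ if ($\alpha=\delta$ or $\beta=\gamma$) and $\alpha,\beta,\gamma,\delta$ are not all collinear; $u$ if no three of $\alpha,\beta,\gamma,\delta$ are collinear; $0$ in all other cases.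
   Context: Points of $\mathrm{PG}_2(q)$ are the $1$-dimensional subspaces of $\mathrm{GF}(q)^3$; points are collinear if they lie in a common $2$-dimensional subspace (line). A derangement is an element of $G$ fixing no point. Equivalently, $N=M^TM$ where $M$ is the $\{0,1\}$-matrix with rows indexed by derangements $g$, columns by $(\alpha,\beta)\in\mathcal{P}^2$, and $M_{g,(\alpha,\beta)}=1$ iff $\alpha^g=\beta$. *)

theory Defs
  imports "HOL-Analysis.Analysis"
begin

text \<open>Points of PG(2,q): the 1-dimensional subspaces of GF(q)^3, where the field is
  a finite field of type 'a (so q = CARD('a) is a prime power).\<close>
definition pg_points :: "('a::{finite,field} ^ 3) set set" where
  "pg_points = {{c *s x | c. True} | x. x \<noteq> 0}"

definition pg_collinear :: "('a::{finite,field} ^ 3) set set \<Rightarrow> bool" where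
  "pg_collinear S \<longleftrightarrow> (\<exists>a b. \<forall>p\<in>S. p \<subseteq> {s *s a + t *s b | s t. True})"

definition mat_smult :: "'a::times \<Rightarrow> 'a ^ 3 ^ 3 \<Rightarrow> 'a ^ 3 ^ 3" where
  "mat_smult c A = (\<chi> i j. c * A $ i $ j)"

definition PGL3 :: "('a::{finite,field} ^ 3 ^ 3) set set" where
  "PGL3 = {{mat_smult c A | c. c \<noteq> 0} | A. invertible A}"

definition pgl_act :: "('a::{finite,field} ^ 3) set \<Rightarrow> ('a ^ 3 ^ 3) set \<Rightarrow> ('a ^ 3) set" where
  "pgl_act \<alpha> g = (\<lambda>x. x v* (SOME A. A \<in> g)) ` \<alpha>"

definition derangement :: "('a::{finite,field} ^ 3 ^ 3) set \<Rightarrow> bool" where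
  "derangement g \<longleftrightarrow> (\<forall>\<alpha>\<in>pg_points. pgl_act \<alpha> g \<noteq> \<alpha>)"

definition Ncount :: "('a::{finite,field} ^ 3) set \<Rightarrow> ('a ^ 3) set \<Rightarrow> ('a ^ 3) set \<Rightarrow> ('a ^ 3) set \<Rightarrow> nat" where
  "Ncount \<alpha> \<beta> \<gamma> \<delta> = card {g \<in> PGL3. pgl_act \<alpha> g = \<beta> \<and> pgl_act \<gamma> g = \<delta> \<and> derangement g}"

end

theory Submission
  imports Defs
begin

text \<open>
  A projectivity g with representative matrix A is a derangement iff A has no eigenvector, i.e.
  iff the characteristic polynomial of A is one of the q(q^2 - 1)/3 monic cubics over GF(q)
  without a root; this number follows by inclusion-exclusion over the roots. Counting matrices
  instead of projectivities multiplies everything by q - 1. A change of basis, together with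
  the symmetries (\<alpha>, \<beta>, \<gamma>, \<delta>) \<mapsto> (\<gamma>, \<delta>, \<alpha>, \<beta>) and g \<mapsto> g^-1, brings every non-degenerate
  configuration into one of four normal forms. There the incidences fix some rows of A up to
  scalars, and for each admissible choice of the fixed entries the coefficients of the
  characteristic polynomial are a bijective function of the free entries. In the degenerate
  configurations A would have to fix a point, identify two points, or leave a line invariant,
  and the last forces an eigenvector as well.
\<close>

section \<open>Monic cubics without roots\<close>

definition monic_cubic :: "'a::field \<times> 'a \<times> 'a \<Rightarrow> 'a \<Rightarrow> 'a" where
  "monic_cubic c x = x^3 + snd (snd c) * x^2 + fst (snd c) * x + fst c"

definition cubic_roots :: "'a::field \<times> 'a \<times> 'a \<Rightarrow> 'a set" where
  "cubic_roots c = {x. monic_cubic c x = 0}"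

definition rootless_cubics :: "('a::field \<times> 'a \<times> 'a) set" where
  "rootless_cubics = {c. \<forall>x. monic_cubic c x \<noteq> 0}"

definition distinct_pairs :: "'b set \<Rightarrow> ('b \<times> 'b) set" where
  "distinct_pairs S = {(x, y). x \<in> S \<and> y \<in> S \<and> x \<noteq> y}"

definition distinct_triples :: "'b set \<Rightarrow> ('b \<times> 'b \<times> 'b) set" where
  "distinct_triples S = {(x, y, z). x \<in> S \<and> y \<in> S \<and> z \<in> S \<and> x \<noteq> y \<and> x \<noteq> z \<and> y \<noteq> z}"

lemma card_distinct_pairs:
  assumes "finite S"
  shows "card (distinct_pairs S) = card S * (card S - 1)"
proof -
  have "distinct_pairs S = (SIGMA x:S. S - {x})"
    by (auto simp: distinct_pairs_def)
  then show ?thesis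
    using assms by (simp add: card_Diff_singleton)
qed

lemma card_distinct_triples:
  assumes "finite S"
  shows "card (distinct_triples S) = card S * (card S - 1) * (card S - 2)"
proof -
  have pairs: "card (distinct_pairs (S - {x})) = (card S - 1) * (card S - 2)" if "x \<in> S" for x
  proof -
    have "card (S - {x}) = card S - 1" "card S - 1 - 1 = card S - 2"
      using that assms by (simp_all add: card_Diff_singleton)
    then show ?thesis
      using assms by (simp add: card_distinct_pairs)
  qed
  have "distinct_triples S = (SIGMA x:S. distinct_pairs (S - {x}))"
    by (auto simp: distinct_triples_def distinct_pairs_def)
  moreover have "finite (distinct_pairs (S - {x}))" for x
    by (rule finite_subset[of _ "S \<times> S"]) (auto simp: distinct_pairs_def assms)
  ultimately have "card (distinct_triples S) = (\<Sum>x\<in>S. card (distinct_pairs (S - {x})))"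
    using assms by simp
  also have "\<dots> = card S * ((card S - 1) * (card S - 2))"
    using pairs by simp
  finally show ?thesis
    by (simp only: mult.assoc)
qed

lemma monic_cubic_two_roots:
  fixes x y :: "'a::field"
  assumes "x \<noteq> y" "monic_cubic (c0, c1, c2) x = 0" "monic_cubic (c0, c1, c2) y = 0"
  shows "c1 = -(x^2 + x*y + y^2) - c2*(x + y)" "c0 = -(x^3 + c2*x^2 + c1*x)"
proof -
  have "monic_cubic (c0, c1, c2) x - monic_cubic (c0, c1, c2) y
      = (x - y) * (x^2 + x*y + y^2 + c2*(x + y) + c1)"
    by (simp add: monic_cubic_def power2_eq_square power3_eq_cube algebra_simps)
  then have "x^2 + x*y + y^2 + c2*(x + y) + c1 = 0"
    using assms by simp
  then show "c1 = -(x^2 + x*y + y^2) - c2*(x + y)"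
    by (simp add: algebra_simps eq_neg_iff_add_eq_0)
  show "c0 = -(x^3 + c2*x^2 + c1*x)"
    using assms(2) by (simp add: monic_cubic_def algebra_simps eq_neg_iff_add_eq_0)
qed

lemma monic_cubic_three_roots:
  fixes x y z :: "'a::field"
  assumes "x \<noteq> y" "x \<noteq> z" "y \<noteq> z"
    and "monic_cubic (c0, c1, c2) x = 0" "monic_cubic (c0, c1, c2) y = 0"
      "monic_cubic (c0, c1, c2) z = 0"
  shows "c2 = -(x + y + z)" "c1 = x*y + x*z + y*z" "c0 = -(x*y*z)"
proof -
  note xy = monic_cubic_two_roots[OF assms(1,4,5)]
  note xz = monic_cubic_two_roots[OF assms(2,4,6)]
  have "(y - z) * (x + y + z + c2) = 0"
    using xy(1) xz(1) by (simp add: power2_eq_square algebra_simps)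
  then have "x + y + z + c2 = 0"
    using assms(3) by simp
  then show c2: "c2 = -(x + y + z)"
    by (simp add: algebra_simps eq_neg_iff_add_eq_0)
  show c1: "c1 = x*y + x*z + y*z"
    using xy(1) c2 by (simp add: power2_eq_square algebra_simps)
  show "c0 = -(x*y*z)"
    using xy(2) c2 c1 by (simp add: power2_eq_square power3_eq_cube algebra_simps)
qed

lemma card_cubic_roots_le_3: "card (cubic_roots (c :: 'a::{field,finite} \<times> 'a \<times> 'a)) \<le> 3"
proof (rule ccontr)
  assume "\<not> ?thesis"
  then obtain T where T: "T \<subseteq> cubic_roots c" "card T = Suc 3"
    by (metis not_le obtain_subset_with_card_n Suc_leI numeral_3_eq_3)
  then obtain w T' where "T = insert w T'" "w \<notin> T'" "card T' = 3"
    by (metis card_Suc_eq)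
  then obtain x y z where "T = {w, x, y, z}" "distinct [w, x, y, z]"
    by (auto simp: card_3_iff)
  moreover obtain c0 c1 c2 where "c = (c0, c1, c2)"
    by (metis prod.exhaust)
  ultimately have "c2 = -(x + y + z)" "c2 = -(w + y + z)"
    using T(1) monic_cubic_three_roots[of _ _ _ c0 c1 c2] by (auto simp: cubic_roots_def)
  then show False
    using \<open>distinct [w, x, y, z]\<close> by simp
qed

lemma card_UNIV_triples: "card (UNIV :: ('a::finite \<times> 'a \<times> 'a) set) = CARD('a)^3"
  by (simp add: card_cartesian_product UNIV_Times_UNIV[symmetric] power3_eq_cube
      del: UNIV_Times_UNIV)

lemma card_root_incidences:
  "card (SIGMA c:UNIV. cubic_roots (c :: 'a::{field,finite} \<times> 'a \<times> 'a)) = CARD('a)^3"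
proof -
  define f where "f = (\<lambda>(x::'a, c1::'a, c2::'a). ((-(x^3 + c2*x^2 + c1*x), c1, c2), x))"
  have "(SIGMA c:UNIV. cubic_roots c) = range f"
  proof (intro equalityI subsetI)
    fix p :: "('a \<times> 'a \<times> 'a) \<times> 'a" assume "p \<in> (SIGMA c:UNIV. cubic_roots c)"
    then obtain c0 c1 c2 x where "p = ((c0, c1, c2), x)" "monic_cubic (c0, c1, c2) x = 0"
      by (auto simp: cubic_roots_def)
    then show "p \<in> range f"
      unfolding f_def by (auto simp: monic_cubic_def eq_neg_iff_add_eq_0 algebra_simps
          intro!: image_eqI[where x = "(x, c1, c2)"])
  qed (auto simp: f_def cubic_roots_def monic_cubic_def)
  moreover have "inj f"
    by (auto simp: f_def inj_def)
  ultimately show ?thesis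
    by (simp add: card_image card_cartesian_product card_UNIV_triples power3_eq_cube)
qed

lemma card_root_pairs:
  "card (SIGMA c:UNIV. distinct_pairs (cubic_roots (c :: 'a::{field,finite} \<times> 'a \<times> 'a)))
    = CARD('a) * (CARD('a) - 1) * CARD('a)"
proof -
  define coeffs where "coeffs = (\<lambda>x y c2 :: 'a. let c1 = -(x^2 + x*y + y^2) - c2*(x + y)
    in (-(x^3 + c2*x^2 + c1*x), c1, c2))"
  define f where "f = (\<lambda>((x :: 'a, y), c2). (coeffs x y c2, x, y))"
  have roots: "monic_cubic (coeffs x y c2) x = 0" "monic_cubic (coeffs x y c2) y = 0" for x y c2
    by (simp_all add: coeffs_def monic_cubic_def Let_def power2_eq_square power3_eq_cube
        algebra_simps)
  have "(SIGMA c:UNIV. distinct_pairs (cubic_roots c)) = f ` (distinct_pairs UNIV \<times> UNIV)"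
  proof (intro equalityI subsetI)
    fix p :: "('a \<times> 'a \<times> 'a) \<times> 'a \<times> 'a" assume "p \<in> (SIGMA c:UNIV. distinct_pairs (cubic_roots c))"
    then obtain c0 c1 c2 x y where p: "p = ((c0, c1, c2), x, y)" and
      xy: "x \<noteq> y" "monic_cubic (c0, c1, c2) x = 0" "monic_cubic (c0, c1, c2) y = 0"
      by (auto simp: distinct_pairs_def cubic_roots_def)
    have "coeffs x y c2 = (c0, c1, c2)"
      using monic_cubic_two_roots[OF xy] by (simp add: coeffs_def Let_def)
    then show "p \<in> f ` (distinct_pairs UNIV \<times> UNIV)"
      using xy(1)
      by (auto simp: p f_def distinct_pairs_def intro!: image_eqI[where x = "((x, y), c2)"])
  qed (auto simp: f_def distinct_pairs_def cubic_roots_def roots)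
  moreover have "inj_on f (distinct_pairs UNIV \<times> UNIV)"
    by (auto simp: f_def coeffs_def inj_on_def Let_def)
  ultimately show ?thesis
    by (simp add: card_image card_cartesian_product card_distinct_pairs)
qed

lemma card_root_triples:
  "card (SIGMA c:UNIV. distinct_triples (cubic_roots (c :: 'a::{field,finite} \<times> 'a \<times> 'a)))
    = CARD('a) * (CARD('a) - 1) * (CARD('a) - 2)"
proof -
  define vieta where "vieta = (\<lambda>x y z :: 'a. (-(x*y*z), x*y + x*z + y*z, -(x + y + z)))"
  define f where "f = (\<lambda>(x, y, z). (vieta x y z, x, y, z))"
  have "monic_cubic (vieta x y z) w = (w - x) * (w - y) * (w - z)" for x y z w
    by (simp add: vieta_def monic_cubic_def power2_eq_square power3_eq_cube algebra_simps)
  then have roots: "monic_cubic (vieta x y z) x = 0" "monic_cubic (vieta x y z) y = 0"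
      "monic_cubic (vieta x y z) z = 0" for x y z
    by simp_all
  have "(SIGMA c:UNIV. distinct_triples (cubic_roots c)) = f ` distinct_triples UNIV"
  proof (intro equalityI subsetI)
    fix p :: "('a \<times> 'a \<times> 'a) \<times> 'a \<times> 'a \<times> 'a"
    assume "p \<in> (SIGMA c:UNIV. distinct_triples (cubic_roots c))"
    then obtain c0 c1 c2 x y z where p: "p = ((c0, c1, c2), x, y, z)" and
      xyz: "x \<noteq> y" "x \<noteq> z" "y \<noteq> z" "monic_cubic (c0, c1, c2) x = 0"
        "monic_cubic (c0, c1, c2) y = 0" "monic_cubic (c0, c1, c2) z = 0"
      by (auto simp: distinct_triples_def cubic_roots_def)
    then show "p \<in> f ` distinct_triples UNIV"
      using monic_cubic_three_roots[OF xyz]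
      by (auto simp: f_def vieta_def distinct_triples_def intro!: image_eqI[where x = "(x, y, z)"])
  qed (auto simp: f_def distinct_triples_def cubic_roots_def roots)
  moreover have "inj_on f (distinct_triples UNIV)"
    by (auto simp: f_def inj_on_def)
  ultimately show ?thesis
    by (simp add: card_image card_distinct_triples)
qed

lemma card_field_ge_2: "2 \<le> CARD('a::{field,finite})"
  using card_mono[of "UNIV :: 'a set" "{0, 1}"] by simp

lemma card_rootless_cubics:
  "3 * card (rootless_cubics :: ('a::{field,finite} \<times> 'a \<times> 'a) set) = CARD('a)^3 - CARD('a)"
proof -
  let ?q = "CARD('a)" and ?R = "rootless_cubics :: ('a \<times> 'a \<times> 'a) set"
  let ?r = "\<lambda>c :: 'a \<times> 'a \<times> 'a. card (cubic_roots c)"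
  \<comment> \<open>cubics with a root, counted through their roots, root pairs and root triples\<close>
  have incl_excl: "6 * (if k = 0 then 0 else 1) + 3 * (k * (k - 1)) = 6 * k + k * (k - 1) * (k - 2)"
    if "k \<le> 3" for k :: nat
    using that by (cases k; cases "k - 1"; cases "k - 2") auto
  have "(\<Sum>c\<in>UNIV. 6 * (if ?r c = 0 then 0 else 1) + 3 * (?r c * (?r c - 1)))
      = (\<Sum>c\<in>UNIV. 6 * ?r c + ?r c * (?r c - 1) * (?r c - 2))"
    by (rule sum.cong[OF refl], rule incl_excl[OF card_cubic_roots_le_3])
  moreover have "(\<Sum>c\<in>UNIV. if ?r c = 0 then 0 else 1) = card (UNIV - ?R)"
  proof -
    have "UNIV - ?R = {c. ?r c \<noteq> 0}"
      by (auto simp: rootless_cubics_def cubic_roots_def card_eq_0_iff)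
    then show ?thesis
      by (simp add: sum.If_cases Compl_eq Collect_neg_eq[symmetric])
  qed
  moreover have "card (UNIV - ?R) = ?q^3 - card ?R"
    by (metis card_Diff_subset finite subset_UNIV card_UNIV_triples)
  ultimately have count: "6 * (?q^3 - card ?R) + 3 * (?q * (?q - 1) * ?q)
      = 6 * ?q^3 + ?q * (?q - 1) * (?q - 2)"
    using card_root_incidences[where 'a = 'a] card_root_pairs[where 'a = 'a]
      card_root_triples[where 'a = 'a]
    by (simp add: sum.distrib sum_distrib_left[symmetric] card_distinct_pairs card_distinct_triples)
  have "card ?R \<le> ?q^3"
    by (metis card_mono finite subset_UNIV card_UNIV_triples)
  moreover have "2 \<le> ?q"
    by (rule card_field_ge_2)
  ultimately have "6 * (int ?q^3 - int (card ?R)) + 3 * (int ?q * (int ?q - 1) * int ?q)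
      = 6 * int ?q^3 + int ?q * (int ?q - 1) * (int ?q - 2)"
    using arg_cong[OF count, of int] by simp
  then have "int (3 * card ?R) = int ?q^3 - int ?q"
    by (simp add: algebra_simps power3_eq_cube)
  also have "\<dots> = int (?q^3 - ?q)"
    by (simp add: power3_eq_cube)
  finally show ?thesis
    by (simp only: of_nat_eq_iff)
qed

section \<open>Matrices without eigenvectors\<close>

definition no_eigenvector :: "'a::field^'n^'n \<Rightarrow> bool" where
  "no_eigenvector A \<longleftrightarrow> (\<forall>x l. x \<noteq> 0 \<longrightarrow> x v* A \<noteq> l *s x)"

definition deranging_matrices :: "'a::field^'n \<Rightarrow> 'a^'n \<Rightarrow> 'a^'n \<Rightarrow> 'a^'n \<Rightarrow> ('a^'n^'n) set" where
  "deranging_matrices a b c d =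
    {A. no_eigenvector A \<and> (\<exists>k. a v* A = k *s b) \<and> (\<exists>k. c v* A = k *s d)}"

lemma vector_matrix_mult_mat: "(x::'a::field^'n) v* mat l = l *s x"
  by (simp add: vec_eq_iff vector_matrix_mult_def mat_def if_distrib mult.commute cong: if_cong)

lemma vector_matrix_mult_diff_right: "(x::'a::field^'n) v* (A - B) = x v* A - x v* B"
  by (simp add: vec_eq_iff vector_matrix_mult_def sum_subtractf algebra_simps)

lemma ex_nonzero_vector_matrix_mult_eq_0_iff:
  fixes A :: "'a::field^'n^'n"
  shows "(\<exists>x. x \<noteq> 0 \<and> x v* A = 0) \<longleftrightarrow> det A = 0"
proof -
  have "det A = 0 \<longleftrightarrow> \<not> (\<exists>B. B ** transpose A = mat 1)"
    by (simp add: invertible_det_nz invertible_left_inverse[symmetric])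
  also have "\<dots> \<longleftrightarrow> (\<exists>x. x \<noteq> 0 \<and> transpose A *v x = 0)"
    by (auto simp: matrix_left_invertible_ker)
  finally show ?thesis
    by simp
qed

lemma no_eigenvector_iff_det: "no_eigenvector (A::'a::field^'n^'n) \<longleftrightarrow> (\<forall>l. det (mat l - A) \<noteq> 0)"
  by (simp add: no_eigenvector_def ex_nonzero_vector_matrix_mult_eq_0_iff[symmetric]
      vector_matrix_mult_diff_right vector_matrix_mult_mat eq_commute[of "l *s x" for l x]) blast

lemma no_eigenvector_nonzero:
  "no_eigenvector A \<Longrightarrow> x \<noteq> 0 \<Longrightarrow> x v* A \<noteq> 0"
  unfolding no_eigenvector_def by (metis vector_smult_lzero)

lemma no_eigenvector_imp_invertible: "no_eigenvector (A::'a::field^'n^'n) \<Longrightarrow> invertible A"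
  using no_eigenvector_nonzero ex_nonzero_vector_matrix_mult_eq_0_iff invertible_det_nz by blast

lemma no_eigenvector_conj:
  fixes B P Q :: "'a::field^'n^'n"
  assumes "no_eigenvector B" "P ** Q = mat 1"
  shows "no_eigenvector (P ** B ** Q)"
  unfolding no_eigenvector_def
proof (intro allI impI notI)
  fix x l assume x: "x \<noteq> 0" "x v* (P ** B ** Q) = l *s x"
  have "x v* P \<noteq> 0"
    using x(1) assms(2)
    by (metis vector_matrix_mul_assoc vector_matrix_mult_0 vector_matrix_mul_rid)
  moreover have "(x v* P) v* B = l *s (x v* P)"
  proof -
    have "Q ** P = mat 1"
      using assms(2) matrix_left_right_inverse by blast
    then have "P ** B ** Q ** P = P ** B"
      by (metis matrix_mul_assoc matrix_mul_rid)
    moreover have "(x v* (P ** B ** Q)) v* P = (l *s x) v* P"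
      using x(2) by simp
    ultimately show ?thesis
      by (simp add: vector_matrix_mul_assoc scalar_vector_matrix_assoc)
  qed
  ultimately show False
    using assms(1) unfolding no_eigenvector_def by blast
qed

lemma ex_vector_matrix_mult_eq_smult_iff:
  fixes a b :: "'a::field^'n"
  assumes "k \<noteq> 0" "k' \<noteq> 0"
  shows "(\<exists>m. (k *s a) v* A = m *s (k' *s b)) \<longleftrightarrow> (\<exists>m. a v* A = m *s b)"
proof
  assume "\<exists>m. (k *s a) v* A = m *s (k' *s b)"
  then obtain m where "k *s (a v* A) = (m * k') *s b"
    by (auto simp: scalar_vector_matrix_assoc)
  then have "a v* A = (m * k' / k) *s b"
    using assms(1) by (metis (no_types, lifting) divide_inverse_commute vector_smult_assoc
        field_class.field_inverse vector_smult_lid)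
  then show "\<exists>m. a v* A = m *s b" ..
next
  assume "\<exists>m. a v* A = m *s b"
  then obtain m where "a v* A = m *s b" ..
  then have "(k *s a) v* A = (k * m / k') *s (k' *s b)"
    using assms(2) by (simp add: scalar_vector_matrix_assoc)
  then show "\<exists>m. (k *s a) v* A = m *s (k' *s b)" ..
qed

lemma deranging_matrices_smult:
  assumes "k1 \<noteq> 0" "k2 \<noteq> 0" "k3 \<noteq> 0" "k4 \<noteq> 0"
  shows "deranging_matrices (k1 *s a) (k2 *s b) (k3 *s c) (k4 *s d) = deranging_matrices a b c d"
  unfolding deranging_matrices_def ex_vector_matrix_mult_eq_smult_iff[OF assms(1,2)]
    ex_vector_matrix_mult_eq_smult_iff[OF assms(3,4)] ..

lemma matrix_mul_conj_cancel:
  fixes B P Q :: "'a::field^'n^'n"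
  assumes "Q ** P = mat 1"
  shows "Q ** (P ** B ** Q) = B ** Q"
proof -
  have "Q ** (P ** B ** Q) = (Q ** P) ** B ** Q"
    by (simp add: matrix_mul_assoc)
  with assms show ?thesis
    by simp
qed

lemma vector_matrix_mult_conj:
  fixes B P Q :: "'a::field^'n^'n"
  assumes "Q ** P = mat 1"
  shows "(x v* Q) v* (P ** B ** Q) = (x v* B) v* Q"
  using matrix_mul_conj_cancel[OF assms] by (simp add: vector_matrix_mul_assoc)

lemma conj_mem_deranging_matrices:
  fixes P Q :: "'a::field^'n^'n"
  assumes "P ** Q = mat 1" "Q ** P = mat 1" "B \<in> deranging_matrices a b c d"
  shows "P ** B ** Q \<in> deranging_matrices (a v* Q) (b v* Q) (c v* Q) (d v* Q)"
proof -
  obtain k k' where "a v* B = k *s b" "c v* B = k' *s d" "no_eigenvector B"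
    using assms(3) by (auto simp: deranging_matrices_def)
  then show ?thesis
    using no_eigenvector_conj[OF _ assms(1)] vector_matrix_mult_conj[OF assms(2)]
    by (auto simp: deranging_matrices_def scalar_vector_matrix_assoc)
qed

lemma card_deranging_matrices_conj:
  fixes Q :: "'a::{field,finite}^'n^'n"
  assumes "invertible Q"
  shows "card (deranging_matrices (a v* Q) (b v* Q) (c v* Q) (d v* Q))
    = card (deranging_matrices a b c d)"
proof -
  obtain P where PQ: "P ** Q = mat 1" and QP: "Q ** P = mat 1"
    using assms unfolding invertible_def by blast
  have "x v* Q v* P = x" for x :: "'a^'n"
    using QP by (simp add: vector_matrix_mul_assoc)
  then have "Q ** A ** P \<in> deranging_matrices a b c d"
    if "A \<in> deranging_matrices (a v* Q) (b v* Q) (c v* Q) (d v* Q)" for A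
    using conj_mem_deranging_matrices[OF QP PQ that] by simp
  moreover have "Q ** (P ** B ** Q) ** P = B" "P ** (Q ** A ** P) ** Q = A" for A B :: "'a^'n^'n"
    using matrix_mul_conj_cancel[OF QP] matrix_mul_conj_cancel[OF PQ] QP PQ
    by (metis matrix_mul_assoc matrix_mul_rid)+
  ultimately have "bij_betw (\<lambda>B. P ** B ** Q) (deranging_matrices a b c d)
      (deranging_matrices (a v* Q) (b v* Q) (c v* Q) (d v* Q))"
    using conj_mem_deranging_matrices[OF PQ QP]
    by (intro bij_betw_byWitness[where f' = "\<lambda>A. Q ** A ** P"]) auto
  then show ?thesis
    by (simp add: bij_betw_same_card)
qed

lemma matrix_inv_eq:
  fixes A B :: "'a::field^'n^'n"
  assumes "A ** B = mat 1" "B ** A = mat 1"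
  shows "matrix_inv A = B"
proof -
  have "A ** matrix_inv A = mat 1 \<and> matrix_inv A ** A = mat 1"
    unfolding matrix_inv_def by (rule someI[of _ B]) (use assms in simp)
  then have "matrix_inv A = (matrix_inv A ** A) ** B"
    by (metis assms(1) matrix_mul_assoc matrix_mul_rid)
  with \<open>_ \<and> _\<close> show ?thesis
    by simp
qed

lemma inverse_mem_deranging_matrices:
  fixes A B :: "'a::field^'n^'n"
  assumes "A ** B = mat 1" "B ** A = mat 1" "a \<noteq> 0" "c \<noteq> 0"
    and "A \<in> deranging_matrices a b c d"
  shows "B \<in> deranging_matrices b a d c"
proof -
  have A: "no_eigenvector A"
    using assms(5) by (simp add: deranging_matrices_def)
  have "no_eigenvector B"
    unfolding no_eigenvector_def
  proof (intro allI impI notI)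
    fix x l assume x: "x \<noteq> 0" "x v* B = l *s x"
    then have "x = l *s (x v* A)"
      using assms(2)
      by (metis scalar_vector_matrix_assoc vector_matrix_mul_assoc vector_matrix_mul_rid)
    with x(1) have "l \<noteq> 0"
      by auto
    with \<open>x = l *s (x v* A)\<close> have "x v* A = inverse l *s x"
      by (metis vector_smult_assoc left_inverse vector_smult_lid)
    with A x(1) show False
      unfolding no_eigenvector_def by blast
  qed
  moreover have "\<exists>k. y v* B = k *s x" if x0: "x \<noteq> 0" and xy: "\<exists>k. x v* A = k *s y" for x y
  proof -
    obtain k where k: "x v* A = k *s y"
      using xy ..
    then have "k \<noteq> 0"
      using no_eigenvector_nonzero[OF A x0] by auto
    have "x = (x v* A) v* B"
      using assms(1) by (simp add: vector_matrix_mul_assoc)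
    with k have "x = k *s (y v* B)"
      by (simp add: scalar_vector_matrix_assoc)
    with \<open>k \<noteq> 0\<close> have "y v* B = inverse k *s x"
      by simp
    then show ?thesis ..
  qed
  ultimately show ?thesis
    using assms(3-5) by (auto simp: deranging_matrices_def)
qed

lemma card_deranging_matrices_inverse:
  fixes a b c d :: "'a::{field,finite}^'n"
  assumes "a \<noteq> 0" "b \<noteq> 0" "c \<noteq> 0" "d \<noteq> 0"
  shows "card (deranging_matrices b a d c) = card (deranging_matrices a b c d)"
proof -
  have inverse: "A ** matrix_inv A = mat 1" "matrix_inv A ** A = mat 1"
    "matrix_inv (matrix_inv A) = A"
    if A: "A \<in> deranging_matrices x y z w" for A :: "'a^'n^'n" and x y z w
  proof -
    obtain B where "A ** B = mat 1" "B ** A = mat 1"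
      using A no_eigenvector_imp_invertible unfolding deranging_matrices_def invertible_def by blast
    moreover from this have "matrix_inv A = B" "matrix_inv B = A"
      by (simp_all add: matrix_inv_eq)
    ultimately show "A ** matrix_inv A = mat 1" "matrix_inv A ** A = mat 1"
      "matrix_inv (matrix_inv A) = A"
      by simp_all
  qed
  have maps: "matrix_inv A \<in> deranging_matrices y x w z"
    if "A \<in> deranging_matrices x y z w" "x \<noteq> 0" "z \<noteq> 0" for A :: "'a^'n^'n" and x y z w
    using inverse_mem_deranging_matrices[OF inverse(1,2)[OF that(1)] that(2,3,1)] .
  have "bij_betw matrix_inv (deranging_matrices a b c d) (deranging_matrices b a d c)"
    by (rule bij_betw_byWitness[where f' = matrix_inv])
      (use inverse(3) maps assms in \<open>auto intro!: image_subsetI\<close>)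
  then show ?thesis
    by (simp add: bij_betw_same_card)
qed

section \<open>Normal forms\<close>

text \<open>Applied to vectors, vec3 builds a matrix from its rows.\<close>

abbreviation vec3 :: "'b \<Rightarrow> 'b \<Rightarrow> 'b \<Rightarrow> 'b::zero^3" where
  "vec3 x y z \<equiv> vector [x, y, z]"

lemma vec3_vector_matrix_mult: "vec3 x y z v* (A::'a::field^3^3) = x *s A$1 + y *s A$2 + z *s A$3"
  by (simp add: vec_eq_iff vector_matrix_mult_def sum_3 mult.commute)

lemma vector_matrix_mult_vec3:
  "(x::'a::field^3) v* vec3 a b c = x$1 *s a + x$2 *s b + x$3 *s c"
  by (simp add: vec_eq_iff vector_matrix_mult_def sum_3 mult.commute)

lemma unit_vec3_vector_matrix_mult [simp]:
  "vec3 1 0 0 v* (A::'a::field^3^3) = A$1"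
  "vec3 0 1 0 v* (A::'a::field^3^3) = A$2"
  "vec3 0 0 1 v* (A::'a::field^3^3) = A$3"
  by (simp_all add: vec3_vector_matrix_mult)

lemma det_mat_minus_3: "det (mat l - (A::'a::field^3^3)) =
    (l - A$1$1) * (l - A$2$2) * (l - A$3$3) - A$1$2 * A$2$3 * A$3$1 - A$1$3 * A$2$1 * A$3$2
    - (l - A$1$1) * A$2$3 * A$3$2 - A$1$2 * A$2$1 * (l - A$3$3) - A$1$3 * (l - A$2$2) * A$3$1"
  by (simp add: det_3 mat_def algebra_simps)

lemma card_deranging_matrices_parametrized:
  fixes h :: "'p::finite \<times> ('a::{field,finite} \<times> 'a \<times> 'a) \<Rightarrow> 'a^'n^'n"
    and g :: "'a^'n^'n \<Rightarrow> 'p \<times> ('a \<times> 'a \<times> 'a)"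
    and \<phi> :: "'p \<Rightarrow> 'a \<times> 'a \<times> 'a \<Rightarrow> 'a \<times> 'a \<times> 'a"
  assumes decode: "\<And>p. g (h p) = p"
    and range: "range h \<subseteq> {A. (\<exists>k. a v* A = k *s b) \<and> (\<exists>k. c v* A = k *s d)}"
    and encode: "\<And>A. (\<exists>k. a v* A = k *s b) \<and> (\<exists>k. c v* A = k *s d) \<Longrightarrow> h (g A) = A"
    and charpoly: "\<And>f y l. det (mat l - h (f, y)) = monic_cubic (\<phi> f y) l"
    and bij: "\<And>f. f \<in> F \<Longrightarrow> bij (\<phi> f)"
    and root: "\<And>f y. f \<notin> F \<Longrightarrow> \<phi> f y \<notin> rootless_cubics"
  shows "card (deranging_matrices a b c d) = card F * card (rootless_cubics :: ('a \<times> 'a \<times> 'a) set)"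
proof -
  let ?R = "rootless_cubics :: ('a \<times> 'a \<times> 'a) set"
  have "no_eigenvector (h (f, y)) \<longleftrightarrow> \<phi> f y \<in> ?R" for f y
    by (simp add: no_eigenvector_iff_det charpoly rootless_cubics_def)
  moreover have "deranging_matrices a b c d = {A \<in> range h. no_eigenvector A}"
    using range encode unfolding deranging_matrices_def by (auto intro: range_eqI[OF sym])
  ultimately have "deranging_matrices a b c d = h ` {(f, y). \<phi> f y \<in> ?R}"
    by auto
  also have "{(f, y). \<phi> f y \<in> ?R} = (SIGMA f:F. \<phi> f -` ?R)"
    using root by auto
  finally have "card (deranging_matrices a b c d) = card (SIGMA f:F. \<phi> f -` ?R)"
    by (simp add: card_image inj_on_inverseI[of _ g] decode)
  also have "\<dots> = (\<Sum>f\<in>F. card (\<phi> f -` ?R))"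
    by simp
  also have "\<dots> = card F * card ?R"
  proof -
    have "card (\<phi> f -` ?R) = card ?R" if "f \<in> F" for f
      using bij[OF that] by (metis bij_betw_subset bij_betw_same_card bij_def surj_image_vimage_eq
          subset_UNIV)
    then show ?thesis
      by simp
  qed
  finally show ?thesis .
qed

lemma card_deranging_matrices_chain_normal_form:
  "card (deranging_matrices (vec3 0 1 0) (vec3 0 0 1) (vec3 1 0 0) (vec3 0 1 0)
      :: ('a::{field,finite}^3^3) set)
    = (CARD('a) - 1)^2 * card (rootless_cubics :: ('a \<times> 'a \<times> 'a) set)"
proof -
  define h :: "('a \<times> 'a) \<times> 'a \<times> 'a \<times> 'a \<Rightarrow> 'a^3^3"
    where "h = (\<lambda>((s, t), (x, y, z)). vec3 (vec3 0 s 0) (vec3 0 0 t) (vec3 x y z))"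
  define g :: "'a^3^3 \<Rightarrow> ('a \<times> 'a) \<times> 'a \<times> 'a \<times> 'a"
    where "g = (\<lambda>A. ((A$1$2, A$2$3), A$3$1, A$3$2, A$3$3))"
  define \<phi> :: "'a \<times> 'a \<Rightarrow> 'a \<times> 'a \<times> 'a \<Rightarrow> 'a \<times> 'a \<times> 'a"
    where "\<phi> = (\<lambda>(s, t) (x, y, z). (-(s*t*x), -(t*y), -z))"
  define F :: "('a \<times> 'a) set" where "F = {(s, t). s \<noteq> 0 \<and> t \<noteq> 0}"
  have "card (deranging_matrices (vec3 0 1 0) (vec3 0 0 1) (vec3 1 0 0) (vec3 0 1 0)
      :: ('a^3^3) set)
      = card F * card (rootless_cubics :: ('a \<times> 'a \<times> 'a) set)"
  proof (rule card_deranging_matrices_parametrized[where h = h and g = g and \<phi> = \<phi>])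
    show "g (h p) = p" for p
      by (simp add: g_def h_def split: prod.splits)
    show "range h \<subseteq>
      {A. (\<exists>k. vec3 0 1 0 v* A = k *s vec3 0 0 1) \<and> (\<exists>k. vec3 1 0 0 v* A = k *s vec3 0 1 0)}"
      by (auto simp: h_def vec_eq_iff forall_3)
    show "h (g A) = A"
      if "(\<exists>k. vec3 0 1 0 v* A = k *s vec3 0 0 1) \<and> (\<exists>k. vec3 1 0 0 v* A = k *s vec3 0 1 0)" for A
      using that by (auto simp: h_def g_def vec_eq_iff forall_3)
    show "det (mat l - h (f, y)) = monic_cubic (\<phi> f y) l" for f y l
      by (cases f, cases y) (simp add: h_def \<phi>_def monic_cubic_def det_mat_minus_3 power2_eq_square
          power3_eq_cube algebra_simps)
    show "bij (\<phi> f)" if f: "f \<in> F" for f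
    proof -
      obtain s t where "f = (s, t)" "s \<noteq> 0" "t \<noteq> 0"
        using f by (cases f) (auto simp: F_def)
      then show ?thesis
        by (intro o_bij[where g = "\<lambda>(c0, c1, c2). (-c0/(s*t), -c1/t, -c2)"])
          (auto simp: \<phi>_def fun_eq_iff)
    qed
    show "\<phi> f y \<notin> rootless_cubics" if "f \<notin> F" for f y
      using that by (auto simp: F_def \<phi>_def rootless_cubics_def monic_cubic_def split: prod.splits
          intro!: exI[where x = 0])
  qed
  moreover have "F = (UNIV - {0}) \<times> (UNIV - {0})"
    by (auto simp: F_def)
  ultimately show ?thesis
    by (simp add: card_cartesian_product card_Diff_subset power2_eq_square)
qed

lemma card_deranging_matrices_pair_normal_form:
  "card (deranging_matrices (vec3 1 0 0) (vec3 0 1 0) (vec3 1 0 0) (vec3 0 1 0)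
      :: ('a::{field,finite}^3^3) set)
    = (CARD('a) - 1)^2 * CARD('a)^2 * card (rootless_cubics :: ('a \<times> 'a \<times> 'a) set)"
proof -
  define h :: "('a \<times> 'a \<times> 'a \<times> 'a) \<times> 'a \<times> 'a \<times> 'a \<Rightarrow> 'a^3^3"
    where "h = (\<lambda>((s, z, r, w), (x, y, p)). vec3 (vec3 0 s 0) (vec3 x y z) (vec3 p r w))"
  define g :: "'a^3^3 \<Rightarrow> ('a \<times> 'a \<times> 'a \<times> 'a) \<times> 'a \<times> 'a \<times> 'a"
    where "g = (\<lambda>A. ((A$1$2, A$2$3, A$3$2, A$3$3), A$2$1, A$2$2, A$3$1))"
  define \<phi> :: "'a \<times> 'a \<times> 'a \<times> 'a \<Rightarrow> 'a \<times> 'a \<times> 'a \<Rightarrow> 'a \<times> 'a \<times> 'a"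
    where "\<phi> = (\<lambda>(s, z, r, w) (x, y, p). (s*(x*w - z*p), y*w - z*r - s*x, -(y + w)))"
  define F :: "('a \<times> 'a \<times> 'a \<times> 'a) set" where "F = {(s, z, r, w). s \<noteq> 0 \<and> z \<noteq> 0}"
  have "card (deranging_matrices (vec3 1 0 0) (vec3 0 1 0) (vec3 1 0 0) (vec3 0 1 0)
      :: ('a^3^3) set)
      = card F * card (rootless_cubics :: ('a \<times> 'a \<times> 'a) set)"
  proof (rule card_deranging_matrices_parametrized[where h = h and g = g and \<phi> = \<phi>])
    show "g (h p) = p" for p
      by (simp add: g_def h_def split: prod.splits)
    show "range h \<subseteq>
      {A. (\<exists>k. vec3 1 0 0 v* A = k *s vec3 0 1 0) \<and> (\<exists>k. vec3 1 0 0 v* A = k *s vec3 0 1 0)}"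
      by (auto simp: h_def vec_eq_iff forall_3)
    show "h (g A) = A"
      if "(\<exists>k. vec3 1 0 0 v* A = k *s vec3 0 1 0) \<and> (\<exists>k. vec3 1 0 0 v* A = k *s vec3 0 1 0)" for A
      using that by (auto simp: h_def g_def vec_eq_iff forall_3)
    show "det (mat l - h (f, y)) = monic_cubic (\<phi> f y) l" for f y l
      by (cases f, cases y) (simp add: h_def \<phi>_def monic_cubic_def det_mat_minus_3 power2_eq_square
          power3_eq_cube algebra_simps)
    show "bij (\<phi> f)" if f: "f \<in> F" for f
    proof -
      obtain s z r w where "f = (s, z, r, w)" "s \<noteq> 0" "z \<noteq> 0"
        using f by (cases f) (auto simp: F_def)
      then show ?thesis
        by (intro o_bij[where g = "\<lambda>(c0, c1, c2). let y = -c2 - w; x = (y*w - z*r - c1)/s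
            in (x, y, (x*w - c0/s)/z)"]) (auto simp: \<phi>_def fun_eq_iff Let_def field_simps)
    qed
    show "\<phi> f y \<notin> rootless_cubics" if f: "f \<notin> F" for f y
    proof -
      obtain s z r w where f: "f = (s, z, r, w)" "s = 0 \<or> z = 0"
        using f by (cases f) (auto simp: F_def)
      then have "monic_cubic (\<phi> f y) (if s = 0 then 0 else w) = 0"
        by (cases y)
          (auto simp: \<phi>_def monic_cubic_def power2_eq_square power3_eq_cube algebra_simps)
      then show ?thesis
        by (auto simp: rootless_cubics_def)
    qed
  qed
  moreover have "F = (UNIV - {0}) \<times> (UNIV - {0}) \<times> UNIV \<times> UNIV"
    by (auto simp: F_def)
  ultimately show ?thesis
    by (simp add: card_cartesian_product card_Diff_subset power2_eq_square)
qed

lemma card_deranging_matrices_collinear_normal_form: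
  "card (deranging_matrices (vec3 1 0 0) (vec3 0 1 0) (vec3 1 1 0) (vec3 0 0 1)
      :: ('a::{field,finite}^3^3) set)
    = (CARD('a) - 1)^2 * card (rootless_cubics :: ('a \<times> 'a \<times> 'a) set)"
proof -
  define h :: "('a \<times> 'a) \<times> 'a \<times> 'a \<times> 'a \<Rightarrow> 'a^3^3"
    where "h = (\<lambda>((s, t), (x, y, z)). vec3 (vec3 0 s 0) (vec3 0 (-s) t) (vec3 x y z))"
  define g :: "'a^3^3 \<Rightarrow> ('a \<times> 'a) \<times> 'a \<times> 'a \<times> 'a"
    where "g = (\<lambda>A. ((A$1$2, A$2$3), A$3$1, A$3$2, A$3$3))"
  define \<phi> :: "'a \<times> 'a \<Rightarrow> 'a \<times> 'a \<times> 'a \<Rightarrow> 'a \<times> 'a \<times> 'a"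
    where "\<phi> = (\<lambda>(s, t) (x, y, z). (-(s*t*x), -(s*z + t*y), s - z))"
  define F :: "('a \<times> 'a) set" where "F = {(s, t). s \<noteq> 0 \<and> t \<noteq> 0}"
  have "card (deranging_matrices (vec3 1 0 0) (vec3 0 1 0) (vec3 1 1 0) (vec3 0 0 1)
      :: ('a^3^3) set)
      = card F * card (rootless_cubics :: ('a \<times> 'a \<times> 'a) set)"
  proof (rule card_deranging_matrices_parametrized[where h = h and g = g and \<phi> = \<phi>])
    show "g (h p) = p" for p
      by (simp add: g_def h_def split: prod.splits)
    show "range h \<subseteq>
      {A. (\<exists>k. vec3 1 0 0 v* A = k *s vec3 0 1 0) \<and> (\<exists>k. vec3 1 1 0 v* A = k *s vec3 0 0 1)}"
      by (auto simp: h_def vec_eq_iff forall_3 vec3_vector_matrix_mult)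
    show "h (g A) = A"
      if "(\<exists>k. vec3 1 0 0 v* A = k *s vec3 0 1 0) \<and> (\<exists>k. vec3 1 1 0 v* A = k *s vec3 0 0 1)" for A
      using that
      by (auto simp: h_def g_def vec_eq_iff forall_3 vec3_vector_matrix_mult add_eq_0_iff)
    show "det (mat l - h (f, y)) = monic_cubic (\<phi> f y) l" for f y l
      by (cases f, cases y) (simp add: h_def \<phi>_def monic_cubic_def det_mat_minus_3 power2_eq_square
          power3_eq_cube algebra_simps)
    show "bij (\<phi> f)" if f: "f \<in> F" for f
    proof -
      obtain s t where "f = (s, t)" "s \<noteq> 0" "t \<noteq> 0"
        using f by (cases f) (auto simp: F_def)
      then show ?thesis
        by (intro o_bij[where g = "\<lambda>(c0, c1, c2). let z = s - c2 in (-c0/(s*t), (-c1 - s*z)/t, z)"])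
          (auto simp: \<phi>_def fun_eq_iff Let_def field_simps)
    qed
    show "\<phi> f y \<notin> rootless_cubics" if "f \<notin> F" for f y
      using that by (auto simp: F_def \<phi>_def rootless_cubics_def monic_cubic_def split: prod.splits
          intro!: exI[where x = 0])
  qed
  moreover have "F = (UNIV - {0}) \<times> (UNIV - {0})"
    by (auto simp: F_def)
  ultimately show ?thesis
    by (simp add: card_cartesian_product card_Diff_subset power2_eq_square)
qed

lemma bij_general_normal_form_coefficients:
  fixes s t :: "'a::field"
  assumes "s \<noteq> 0" "t \<noteq> 0" "s + t \<noteq> 0"
  shows "bij (\<lambda>(m, y, z). (s*t*m, y*t - (s + t)*z - s*m, -(y + t)))"
    (is "bij ?\<phi>")
proof -
  define g :: "'a \<times> 'a \<times> 'a \<Rightarrow> 'a \<times> 'a \<times> 'a"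
    where "g = (\<lambda>(c0, c1, c2). let m = c0/(s*t); y = -c2 - t in (m, y, (y*t - s*m - c1)/(s + t)))"
  have "g (?\<phi> p) = p" for p
    using assms by (cases p) (simp add: g_def Let_def)
  moreover have "?\<phi> (g c) = c" for c
  proof (cases c)
    case (fields c0 c1 c2)
    define m y where "m = c0/(s*t)" and "y = -c2 - t"
    define z where "z = (y*t - s*m - c1)/(s + t)"
    have "s*t*m = c0" "y*t - (s + t)*z - s*m = c1" "-(y + t) = c2"
      using assms by (simp_all add: m_def y_def z_def)
    moreover have "g c = (m, y, z)"
      by (simp add: g_def fields m_def y_def z_def Let_def)
    ultimately show ?thesis
      by (simp add: fields)
  qed
  ultimately show ?thesis
    by (intro o_bij[of g]) (auto simp: fun_eq_iff)
qed

lemma card_deranging_matrices_general_normal_form: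
  "card (deranging_matrices (vec3 1 0 0) (vec3 0 1 0) (vec3 0 0 1) (vec3 1 1 1)
      :: ('a::{field,finite}^3^3) set)
    = (CARD('a) - 1) * (CARD('a) - 2) * card (rootless_cubics :: ('a \<times> 'a \<times> 'a) set)"
proof -
  define h :: "('a \<times> 'a) \<times> 'a \<times> 'a \<times> 'a \<Rightarrow> 'a^3^3"
    where "h = (\<lambda>((s, t), (m, y, z)). vec3 (vec3 0 s 0) (vec3 (z + m) y z) (vec3 t t t))"
  define g :: "'a^3^3 \<Rightarrow> ('a \<times> 'a) \<times> 'a \<times> 'a \<times> 'a"
    where "g = (\<lambda>A. ((A$1$2, A$3$1), A$2$1 - A$2$3, A$2$2, A$2$3))"
  define \<phi> :: "'a \<times> 'a \<Rightarrow> 'a \<times> 'a \<times> 'a \<Rightarrow> 'a \<times> 'a \<times> 'a"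
    where "\<phi> = (\<lambda>(s, t) (m, y, z). (s*t*m, y*t - (s + t)*z - s*m, -(y + t)))"
  define F :: "('a \<times> 'a) set" where "F = {(s, t). s \<noteq> 0 \<and> t \<noteq> 0 \<and> s + t \<noteq> 0}"
  have "card (deranging_matrices (vec3 1 0 0) (vec3 0 1 0) (vec3 0 0 1) (vec3 1 1 1)
      :: ('a^3^3) set)
      = card F * card (rootless_cubics :: ('a \<times> 'a \<times> 'a) set)"
  proof (rule card_deranging_matrices_parametrized[where h = h and g = g and \<phi> = \<phi>])
    show "g (h p) = p" for p
      by (simp add: g_def h_def split: prod.splits)
    show "range h \<subseteq>
      {A. (\<exists>k. vec3 1 0 0 v* A = k *s vec3 0 1 0) \<and> (\<exists>k. vec3 0 0 1 v* A = k *s vec3 1 1 1)}"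
      by (auto simp: h_def vec_eq_iff forall_3)
    show "h (g A) = A"
      if "(\<exists>k. vec3 1 0 0 v* A = k *s vec3 0 1 0) \<and> (\<exists>k. vec3 0 0 1 v* A = k *s vec3 1 1 1)" for A
      using that by (auto simp: h_def g_def vec_eq_iff forall_3)
    show "det (mat l - h (f, y)) = monic_cubic (\<phi> f y) l" for f y l
      by (cases f, cases y) (simp add: h_def \<phi>_def monic_cubic_def det_mat_minus_3 power2_eq_square
          power3_eq_cube algebra_simps)
    show "bij (\<phi> f)" if f: "f \<in> F" for f
    proof -
      obtain s t where "f = (s, t)" "s \<noteq> 0" "t \<noteq> 0" "s + t \<noteq> 0"
        using f by (cases f) (auto simp: F_def)
      then show ?thesis
        using bij_general_normal_form_coefficients by (simp add: \<phi>_def)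
    qed
    show "\<phi> f y \<notin> rootless_cubics" if f: "f \<notin> F" for f y
    proof -
      obtain s t where f: "f = (s, t)" "s = 0 \<or> t = 0 \<or> s + t = 0"
        using f by (cases f) (auto simp: F_def)
      then have "monic_cubic (\<phi> f y) (if s + t = 0 then t else 0) = 0"
        by (cases y) (auto simp: \<phi>_def monic_cubic_def power2_eq_square power3_eq_cube algebra_simps
            eq_neg_iff_add_eq_0[symmetric])
      then show ?thesis
        by (auto simp: rootless_cubics_def)
    qed
  qed
  moreover have "F = (SIGMA s:UNIV - {0}. UNIV - {0, -s})"
    by (auto simp: F_def eq_neg_iff_add_eq_0 add.commute)
  ultimately show ?thesis
    by (simp add: card_Diff_subset numeral_2_eq_2)
qed

section \<open>Points and collinearity\<close>

definition proj_point :: "'a::field^'n \<Rightarrow> ('a^'n) set" where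
  "proj_point x = {c *s x | c. True}"

lemma mem_proj_point: "x \<in> proj_point x"
  unfolding proj_point_def by (auto intro!: exI[where x = 1])

lemma proj_point_eq_iff:
  assumes "(y::'a::field^'n) \<noteq> 0"
  shows "proj_point x = proj_point y \<longleftrightarrow> x \<noteq> 0 \<and> (\<exists>k. x = k *s y)"
proof
  assume eq: "proj_point x = proj_point y"
  then obtain k where "x = k *s y"
    using mem_proj_point[of x] unfolding proj_point_def by auto
  moreover have "x \<noteq> 0"
    using eq mem_proj_point[of y] assms unfolding proj_point_def by auto
  ultimately show "x \<noteq> 0 \<and> (\<exists>k. x = k *s y)"
    by blast
next
  assume "x \<noteq> 0 \<and> (\<exists>k. x = k *s y)"
  then obtain k where k: "x = k *s y" "k \<noteq> 0"
    by auto
  show "proj_point x = proj_point y"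
  proof (intro equalityI subsetI)
    fix v assume "v \<in> proj_point x"
    then obtain c where "v = c *s x"
      unfolding proj_point_def by blast
    then have "v = (c * k) *s y"
      using k by simp
    then show "v \<in> proj_point y"
      unfolding proj_point_def by blast
  next
    fix v assume "v \<in> proj_point y"
    then obtain c where "v = c *s y"
      unfolding proj_point_def by blast
    then have "v = (c / k) *s x"
      using k by simp
    then show "v \<in> proj_point x"
      unfolding proj_point_def by blast
  qed
qed

lemma pg_points_iff: "\<alpha> \<in> pg_points \<longleftrightarrow> (\<exists>x. x \<noteq> 0 \<and> \<alpha> = proj_point x)"
  unfolding pg_points_def proj_point_def by auto

lemma image_proj_point: "(\<lambda>x. x v* M) ` proj_point a = proj_point (a v* (M::'a::field^'n^'m))"
  unfolding proj_point_def by (force simp: scalar_vector_matrix_assoc)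

lemma det_vec3:
  "det (vec3 a b c :: 'a::comm_ring_1^3^3) =
    a$1*b$2*c$3 + a$2*b$3*c$1 + a$3*b$1*c$2 - a$1*b$3*c$2 - a$2*b$1*c$3 - a$3*b$2*c$1"
  by (simp add: det_3)

lemma ex_det_vec3_nonzero:
  fixes x y :: "'a::field^3"
  assumes "x \<noteq> 0" "y \<noteq> 0" "proj_point x \<noteq> proj_point y"
  shows "\<exists>w. det (vec3 x y w) \<noteq> 0"
proof (rule ccontr)
  assume "\<nexists>w. det (vec3 x y w) \<noteq> 0"
  then have "det (vec3 x y (vec3 1 0 0)) = 0" "det (vec3 x y (vec3 0 1 0)) = 0"
    "det (vec3 x y (vec3 0 0 1)) = 0"
    by auto
  then have e: "x$2*y$3 = x$3*y$2" "x$3*y$1 = x$1*y$3" "x$1*y$2 = x$2*y$1"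
    by (simp_all add: det_vec3 algebra_simps)
  have "y$1 \<noteq> 0 \<or> y$2 \<noteq> 0 \<or> y$3 \<noteq> 0"
    using assms(2) by (auto simp: vec_eq_iff forall_3)
  then have "x = (x$1 / y$1) *s y \<or> x = (x$2 / y$2) *s y \<or> x = (x$3 / y$3) *s y"
    using e by (auto simp: vec_eq_iff forall_3 field_simps)
  then show False
    using assms proj_point_eq_iff by blast
qed

lemma linear_combination_if_det_vec3_nonzero:
  fixes a b c :: "'a::field^3"
  assumes "det (vec3 a b c) \<noteq> 0"
  shows "\<exists>l m n. x = l *s a + m *s b + n *s c"
proof -
  obtain P where "P ** vec3 a b c = mat 1"
    using assms by (metis invertible_det_nz invertible_def)
  then have "x = (x v* P) v* vec3 a b c"
    by (simp add: vector_matrix_mul_assoc)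
  then show ?thesis
    by (auto simp: vector_matrix_mult_vec3)
qed

lemma det_vec3_linear_combination:
  "det (vec3 a b (l *s a + m *s b + n *s w)) = n * det (vec3 a b (w::'a::field^3))"
  by (simp add: det_vec3 algebra_simps)

lemma linear_combination_if_det_vec3_eq_0:
  fixes x y z :: "'a::field^3"
  assumes "x \<noteq> 0" "y \<noteq> 0" "proj_point x \<noteq> proj_point y" "det (vec3 x y z) = 0"
  shows "\<exists>l m. z = l *s x + m *s y"
proof -
  obtain w where w: "det (vec3 x y w) \<noteq> 0"
    using ex_det_vec3_nonzero[OF assms(1-3)] by blast
  then obtain l m n where z: "z = l *s x + m *s y + n *s w"
    using linear_combination_if_det_vec3_nonzero by blast
  then have "n = 0"
    using assms(4) w by (simp add: det_vec3_linear_combination)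
  with z show ?thesis
    by auto
qed

lemma proj_point_subset_plane:
  assumes "x = l *s a + m *s (b::'a::field^'n)"
  shows "proj_point x \<subseteq> {s *s a + t *s b | s t. True}"
proof
  fix v assume "v \<in> proj_point x"
  then obtain c where "v = c *s (l *s a + m *s b)"
    unfolding proj_point_def assms by blast
  then have "v = (c * l) *s a + (c * m) *s b"
    by (simp add: vector_add_ldistrib)
  then show "v \<in> {s *s a + t *s b | s t. True}"
    by blast
qed

lemma pg_collinear_proj_point_iff:
  fixes a b c :: "'a::{field,finite}^3"
  assumes "a \<noteq> 0" "b \<noteq> 0" "c \<noteq> 0"
  shows "pg_collinear {proj_point a, proj_point b, proj_point c} \<longleftrightarrow> det (vec3 a b c) = 0"
proof
  assume "pg_collinear {proj_point a, proj_point b, proj_point c}"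
  then obtain x y where plane: "\<And>v. v \<in> {a, b, c} \<Longrightarrow> v \<in> {s *s x + t *s y | s t. True}"
    unfolding pg_collinear_def using mem_proj_point by blast
  obtain s1 t1 s2 t2 s3 t3
    where "a = s1 *s x + t1 *s y" "b = s2 *s x + t2 *s y" "c = s3 *s x + t3 *s y"
    using plane[of a] plane[of b] plane[of c] by blast
  then show "det (vec3 a b c) = 0"
    by (simp add: det_vec3 algebra_simps)
next
  assume det: "det (vec3 a b c) = 0"
  show "pg_collinear {proj_point a, proj_point b, proj_point c}"
  proof (cases "proj_point a = proj_point b")
    case True
    then obtain k where "b = k *s a"
      using proj_point_eq_iff assms by metis
    then have "proj_point v \<subseteq> {s *s a + t *s c | s t. True}" if "v \<in> {a, b, c}" for v
      using that proj_point_subset_plane[of a 1 a 0 c] proj_point_subset_plane[of b k a 0 c]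
        proj_point_subset_plane[of c 0 a 1 c] by auto
    then show ?thesis
      unfolding pg_collinear_def by blast
  next
    case False
    then obtain l m where "c = l *s a + m *s b"
      using linear_combination_if_det_vec3_eq_0 assms det by blast
    then have "proj_point v \<subseteq> {s *s a + t *s b | s t. True}" if "v \<in> {a, b, c}" for v
      using that proj_point_subset_plane[of a 1 a 0 b] proj_point_subset_plane[of b 0 a 1 b]
        proj_point_subset_plane[of c l a m b] by auto
    then show ?thesis
      unfolding pg_collinear_def by blast
  qed
qed

lemma pg_collinear_subset: "pg_collinear S \<Longrightarrow> T \<subseteq> S \<Longrightarrow> pg_collinear T"
  unfolding pg_collinear_def by blast

lemma pg_collinear_4I:
  assumes "\<alpha> \<in> pg_points" "\<beta> \<in> pg_points" "\<gamma> \<in> pg_points" "\<delta> \<in> pg_points" "\<alpha> \<noteq> \<beta>"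
    and "pg_collinear {\<alpha>, \<beta>, \<gamma>}" "pg_collinear {\<alpha>, \<beta>, \<delta>}"
  shows "pg_collinear {\<alpha>, \<beta>, \<gamma>, \<delta>}"
proof -
  obtain a b c d :: "'a^3" where nonzero: "a \<noteq> 0" "b \<noteq> 0" "c \<noteq> 0" "d \<noteq> 0"
    and points: "\<alpha> = proj_point a" "\<beta> = proj_point b" "\<gamma> = proj_point c" "\<delta> = proj_point d"
    using assms(1-4) by (meson pg_points_iff)
  have "det (vec3 a b c) = 0" "det (vec3 a b d) = 0"
    using assms(6,7) pg_collinear_proj_point_iff nonzero unfolding points by blast+
  then obtain l m l' m' where "c = l *s a + m *s b" "d = l' *s a + m' *s b"
    using linear_combination_if_det_vec3_eq_0 nonzero assms(5) unfolding points by metis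
  then have "proj_point v \<subseteq> {s *s a + t *s b | s t. True}" if "v \<in> {a, b, c, d}" for v
    using that proj_point_subset_plane[of a 1 a 0 b] proj_point_subset_plane[of b 0 a 1 b]
      proj_point_subset_plane[of c l a m b] proj_point_subset_plane[of d l' a m' b] by auto
  then show ?thesis
    unfolding pg_collinear_def points by blast
qed

section \<open>Derangements as matrices\<close>

lemma vector_matrix_mult_mat_smult: "(x::'a::field^3) v* mat_smult c A = (c *s x) v* A"
  by (simp add: vec_eq_iff vector_matrix_mult_def mat_smult_def sum_distrib_left mult_ac)

lemma mat_smult_mat_smult: "mat_smult c (mat_smult c' A) = mat_smult (c * c') (A::'a::field^3^3)"
  by (simp add: mat_smult_def vec_eq_iff mult_ac)

lemma mat_smult_1: "mat_smult 1 A = (A::'a::field^3^3)"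
  by (simp add: mat_smult_def vec_eq_iff)

lemma invertible_mat_smult:
  assumes "c \<noteq> 0" "invertible (A::'a::field^3^3)"
  shows "invertible (mat_smult c A)"
proof -
  have "det (mat_smult c A) = c^3 * det A"
    by (simp add: det_3 mat_smult_def power3_eq_cube algebra_simps)
  with assms show ?thesis
    by (simp add: invertible_det_nz)
qed

lemma no_eigenvector_mat_smult:
  assumes "c \<noteq> 0"
  shows "no_eigenvector (mat_smult c A) \<longleftrightarrow> no_eigenvector (A::'a::field^3^3)"
proof -
  have "(\<exists>l. x v* mat_smult c A = l *s x) \<longleftrightarrow> (\<exists>l. x v* A = l *s x)" for x
    using ex_vector_matrix_mult_eq_smult_iff[OF assms one_neq_zero, of x A x]
    by (simp add: vector_matrix_mult_mat_smult)
  then show ?thesis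
    unfolding no_eigenvector_def by blast
qed

lemma mat_smult_mem_deranging_matrices:
  assumes "c \<noteq> 0"
  shows "mat_smult c A \<in> deranging_matrices a b x d \<longleftrightarrow> A \<in> deranging_matrices a b x (d::'a::field^3)"
proof -
  have "(\<exists>m. (c *s y) v* A = m *s z) \<longleftrightarrow> (\<exists>m. y v* A = m *s z)" for y z
    using ex_vector_matrix_mult_eq_smult_iff[OF assms one_neq_zero, of y A z] by simp
  then show ?thesis
    by (simp add: deranging_matrices_def vector_matrix_mult_mat_smult
        no_eigenvector_mat_smult[OF assms])
qed

definition scalar_class :: "'a::field^3^3 \<Rightarrow> ('a^3^3) set" where
  "scalar_class A = {mat_smult c A | c. c \<noteq> 0}"

lemma PGL3_eq: "PGL3 = {scalar_class A | A. invertible A}"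
  unfolding PGL3_def scalar_class_def ..

lemma mem_scalar_class: "A \<in> scalar_class A"
proof -
  have "A = mat_smult 1 A"
    by (simp add: mat_smult_1)
  then show ?thesis
    unfolding scalar_class_def using one_neq_zero by blast
qed

lemma scalar_class_eq:
  assumes "B \<in> scalar_class A"
  shows "scalar_class B = scalar_class A"
proof -
  obtain k where k: "k \<noteq> 0" "B = mat_smult k A"
    using assms unfolding scalar_class_def by blast
  show ?thesis
  proof (intro equalityI subsetI)
    fix M assume "M \<in> scalar_class B"
    then obtain c where "c \<noteq> 0" "M = mat_smult (c * k) A"
      using k unfolding scalar_class_def by (auto simp: mat_smult_mat_smult)
    with k(1) show "M \<in> scalar_class A"
      unfolding scalar_class_def by auto
  next
    fix M assume "M \<in> scalar_class A"
    then obtain c where "c \<noteq> 0" "M = mat_smult c A"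
      unfolding scalar_class_def by blast
    with k have "c / k \<noteq> 0" "M = mat_smult (c / k) B"
      by (simp_all add: mat_smult_mat_smult)
    then show "M \<in> scalar_class B"
      unfolding scalar_class_def by blast
  qed
qed

lemma card_scalar_class:
  assumes "invertible (A::'a::{field,finite}^3^3)"
  shows "card (scalar_class A) = CARD('a) - 1"
proof -
  have "A \<noteq> 0"
    using assms by (auto simp: invertible_det_nz det_3)
  then obtain i j where "A$i$j \<noteq> 0"
    by (auto simp: vec_eq_iff)
  then have "inj_on (\<lambda>c. mat_smult c A) (UNIV - {0})"
    by (auto simp: inj_on_def mat_smult_def vec_eq_iff)
  moreover have "scalar_class A = (\<lambda>c. mat_smult c A) ` (UNIV - {0})"
    unfolding scalar_class_def by auto
  ultimately show ?thesis
    by (simp add: card_image card_Diff_subset)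
qed

lemma PGL3_representative:
  assumes "g \<in> PGL3"
  shows "(SOME M. M \<in> g) \<in> g" "g = scalar_class (SOME M. M \<in> g)" "invertible (SOME M. M \<in> g)"
proof -
  obtain A where A: "g = scalar_class A" "invertible A"
    using assms PGL3_eq by blast
  then have "A \<in> g"
    by (simp add: mem_scalar_class)
  then show M: "(SOME M. M \<in> g) \<in> g"
    by (rule someI)
  then have "scalar_class (SOME M. M \<in> g) = scalar_class A"
    using A(1) by (intro scalar_class_eq) simp
  with A(1) show "g = scalar_class (SOME M. M \<in> g)"
    by (rule trans[OF _ sym])
  from M A obtain c where "c \<noteq> 0" "(SOME M. M \<in> g) = mat_smult c A"
    unfolding scalar_class_def by blast
  with A show "invertible (SOME M. M \<in> g)"
    by (simp add: invertible_mat_smult)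
qed

lemma pgl_act_proj_point: "pgl_act (proj_point a) g = proj_point (a v* (SOME M. M \<in> g))"
  unfolding pgl_act_def by (rule image_proj_point)

lemma invertible_vector_matrix_mult_nonzero:
  "invertible (A::'a::field^'n^'n) \<Longrightarrow> x \<noteq> 0 \<Longrightarrow> x v* A \<noteq> 0"
  using ex_nonzero_vector_matrix_mult_eq_0_iff invertible_det_nz by blast

lemma derangement_iff_no_eigenvector:
  assumes "g \<in> PGL3"
  shows "derangement g \<longleftrightarrow> no_eigenvector (SOME M. M \<in> g)"
proof -
  define M where "M = (SOME M. M \<in> g)"
  have M: "invertible M"
    unfolding M_def using PGL3_representative(3)[OF assms] .
  have "derangement g \<longleftrightarrow> (\<forall>x. x \<noteq> 0 \<longrightarrow> pgl_act (proj_point x) g \<noteq> proj_point x)"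
    unfolding derangement_def Ball_def pg_points_iff by blast
  also have "\<dots> \<longleftrightarrow> (\<forall>x. x \<noteq> 0 \<longrightarrow> proj_point (x v* M) \<noteq> proj_point x)"
    unfolding pgl_act_proj_point[of _ g, folded M_def] ..
  also have "\<dots> \<longleftrightarrow> (\<forall>x. x \<noteq> 0 \<longrightarrow> (\<forall>l. x v* M \<noteq> l *s x))"
  proof -
    have "proj_point (x v* M) = proj_point x \<longleftrightarrow> (\<exists>l. x v* M = l *s x)" if "x \<noteq> 0" for x
      using proj_point_eq_iff[OF that, of "x v* M"] invertible_vector_matrix_mult_nonzero[OF M that]
      by simp
    then show ?thesis
      by blast
  qed
  finally show ?thesis
    by (simp add: no_eigenvector_def M_def)
qed

lemma Ncount_conditions_iff:
  assumes "g \<in> PGL3" "a \<noteq> 0" "b \<noteq> 0" "c \<noteq> 0" "d \<noteq> 0"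
  shows "(pgl_act (proj_point a) g = proj_point b \<and> pgl_act (proj_point c) g = proj_point d
      \<and> derangement g) \<longleftrightarrow> g \<subseteq> deranging_matrices a b c d"
proof -
  define M where "M = (SOME M. M \<in> g)"
  note rep = PGL3_representative[OF assms(1), folded M_def]
  have "a v* M \<noteq> 0" "c v* M \<noteq> 0"
    using invertible_vector_matrix_mult_nonzero rep(3) assms(2,4) by blast+
  then have "(pgl_act (proj_point a) g = proj_point b \<and> pgl_act (proj_point c) g = proj_point d
      \<and> derangement g) \<longleftrightarrow> M \<in> deranging_matrices a b c d"
    using assms(3,5) unfolding pgl_act_proj_point derangement_iff_no_eigenvector[OF assms(1)]
      M_def[symmetric] deranging_matrices_def by (auto simp: proj_point_eq_iff)
  also have "\<dots> \<longleftrightarrow> g \<subseteq> deranging_matrices a b c d"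
    using rep(1,2) mat_smult_mem_deranging_matrices unfolding scalar_class_def by blast
  finally show ?thesis .
qed

lemma card_deranging_matrices_eq_Ncount:
  fixes a b c d :: "'a::{field,finite}^3"
  assumes "a \<noteq> 0" "b \<noteq> 0" "c \<noteq> 0" "d \<noteq> 0"
  shows "card (deranging_matrices a b c d)
    = (CARD('a) - 1) * Ncount (proj_point a) (proj_point b) (proj_point c) (proj_point d)"
proof -
  define C where "C = {g \<in> PGL3. g \<subseteq> deranging_matrices a b c d}"
  have "Ncount (proj_point a) (proj_point b) (proj_point c) (proj_point d) = card C"
    unfolding Ncount_def C_def using Ncount_conditions_iff[OF _ assms] by (metis (lifting))
  moreover have "deranging_matrices a b c d = \<Union>C"
  proof (intro equalityI subsetI)
    fix A assume A: "A \<in> deranging_matrices a b c d"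
    then have "invertible A"
      using no_eigenvector_imp_invertible by (auto simp: deranging_matrices_def)
    moreover have "scalar_class A \<subseteq> deranging_matrices a b c d"
      using A by (auto simp: scalar_class_def mat_smult_mem_deranging_matrices)
    ultimately have "scalar_class A \<in> C"
      by (auto simp: C_def PGL3_eq)
    then show "A \<in> \<Union>C"
      using mem_scalar_class by blast
  qed (auto simp: C_def)
  moreover have "card g = CARD('a) - 1" if "g \<in> C" for g
    using that card_scalar_class unfolding C_def PGL3_eq by blast
  moreover have "g = g'" if classes: "g \<in> C" "g' \<in> C" and common: "M \<in> g" "M \<in> g'" for g g' M
  proof -
    obtain A A' where "g = scalar_class A" "g' = scalar_class A'"
      using classes by (auto simp: C_def PGL3_eq)
    with common show "g = g'"
      using scalar_class_eq[of M A] scalar_class_eq[of M A'] by simp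
  qed
  then have "pairwise disjnt C"
    unfolding pairwise_def disjnt_def by blast
  ultimately show ?thesis
    by (simp add: card_Union_disjoint)
qed

section \<open>The counts\<close>

lemma card_deranging_matrices_pair:
  fixes a b :: "'a::{field,finite}^3"
  assumes "a \<noteq> 0" "b \<noteq> 0" "proj_point a \<noteq> proj_point b"
  shows "card (deranging_matrices a b a b)
    = (CARD('a) - 1)^2 * CARD('a)^2 * card (rootless_cubics :: ('a \<times> 'a \<times> 'a) set)"
proof -
  obtain w where "det (vec3 a b w) \<noteq> 0"
    using ex_det_vec3_nonzero[OF assms] by blast
  then have "invertible (vec3 a b w)"
    by (simp add: invertible_det_nz)
  from card_deranging_matrices_conj[OF this, of "vec3 1 0 0" "vec3 0 1 0" "vec3 1 0 0" "vec3 0 1 0"]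
  show ?thesis
    using card_deranging_matrices_pair_normal_form by simp
qed

lemma card_deranging_matrices_chain:
  fixes a b c :: "'a::{field,finite}^3"
  assumes "det (vec3 c a b) \<noteq> 0"
  shows "card (deranging_matrices a b c a)
    = (CARD('a) - 1)^2 * card (rootless_cubics :: ('a \<times> 'a \<times> 'a) set)"
proof -
  from assms have "invertible (vec3 c a b)"
    by (simp add: invertible_det_nz)
  from card_deranging_matrices_conj[OF this, of "vec3 0 1 0" "vec3 0 0 1" "vec3 1 0 0" "vec3 0 1 0"]
  show ?thesis
    using card_deranging_matrices_chain_normal_form by simp
qed

lemma card_deranging_matrices_collinear:
  fixes a b c d :: "'a::{field,finite}^3"
  assumes "c = l *s a + m *s b" "l \<noteq> 0" "m \<noteq> 0" "det (vec3 a b d) \<noteq> 0"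
  shows "card (deranging_matrices a b c d)
    = (CARD('a) - 1)^2 * card (rootless_cubics :: ('a \<times> 'a \<times> 'a) set)"
proof -
  have "det (vec3 (l *s a) (m *s b) d) = l * m * det (vec3 a b d)"
    by (simp add: det_vec3 algebra_simps)
  with assms(2-4) have "invertible (vec3 (l *s a) (m *s b) d)"
    by (simp add: invertible_det_nz)
  from card_deranging_matrices_conj[OF this, of "vec3 1 0 0" "vec3 0 1 0" "vec3 1 1 0" "vec3 0 0 1"]
  have "card (deranging_matrices (l *s a) (m *s b) c d)
      = card (deranging_matrices (vec3 1 0 0) (vec3 0 1 0) (vec3 1 1 0) (vec3 0 0 1) :: ('a^3^3) set)"
    using assms(1) by (simp add: vector_matrix_mult_vec3)
  also have "deranging_matrices (l *s a) (m *s b) c d = deranging_matrices a b c d"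
    using deranging_matrices_smult[of l m 1 1 a b c d] assms(2,3) by simp
  finally show ?thesis
    using card_deranging_matrices_collinear_normal_form by simp
qed

lemma card_deranging_matrices_general:
  fixes a b c d :: "'a::{field,finite}^3"
  assumes "det (vec3 a b c) \<noteq> 0" "det (vec3 a b d) \<noteq> 0"
    and "det (vec3 a c d) \<noteq> 0" "det (vec3 b c d) \<noteq> 0"
  shows "card (deranging_matrices a b c d)
    = (CARD('a) - 1) * (CARD('a) - 2) * card (rootless_cubics :: ('a \<times> 'a \<times> 'a) set)"
proof -
  obtain l m n where d: "d = l *s a + m *s b + n *s c"
    using linear_combination_if_det_vec3_nonzero[OF assms(1)] by blast
  have "det (vec3 a b d) = n * det (vec3 a b c)" "det (vec3 a c d) = - m * det (vec3 a b c)"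
    "det (vec3 b c d) = l * det (vec3 a b c)"
    unfolding d by (simp_all add: det_vec3 algebra_simps)
  then have "l \<noteq> 0" "m \<noteq> 0" "n \<noteq> 0"
    using assms by auto
  moreover have "det (vec3 (l *s a) (m *s b) (n *s c)) = l * m * n * det (vec3 a b c)"
    by (simp add: det_vec3 algebra_simps)
  ultimately have "invertible (vec3 (l *s a) (m *s b) (n *s c))"
    using assms(1) by (simp add: invertible_det_nz)
  from card_deranging_matrices_conj[OF this, of "vec3 1 0 0" "vec3 0 1 0" "vec3 0 0 1" "vec3 1 1 1"]
  have "card (deranging_matrices (l *s a) (m *s b) (n *s c) d)
      = card (deranging_matrices (vec3 1 0 0) (vec3 0 1 0) (vec3 0 0 1) (vec3 1 1 1) :: ('a^3^3) set)"
    using d by (simp add: vector_matrix_mult_vec3 add.assoc)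
  also have "deranging_matrices (l *s a) (m *s b) (n *s c) d = deranging_matrices a b c d"
    using deranging_matrices_smult[of l m n 1 a b c d] \<open>l \<noteq> 0\<close> \<open>m \<noteq> 0\<close> \<open>n \<noteq> 0\<close> by simp
  finally show ?thesis
    using card_deranging_matrices_general_normal_form by simp
qed

text \<open>In a basis x, y, w the matrix becomes block triangular, so its (3, 3) entry is an eigenvalue.\<close>

lemma not_no_eigenvector_if_invariant_plane:
  fixes x y :: "'a::field^3"
  assumes "x \<noteq> 0" "y \<noteq> 0" "proj_point x \<noteq> proj_point y"
    and "x v* A = l *s x + m *s y" "y v* A = l' *s x + m' *s y"
  shows "\<not> no_eigenvector A"
proof
  assume A: "no_eigenvector A"
  obtain w where "det (vec3 x y w) \<noteq> 0"
    using ex_det_vec3_nonzero[OF assms(1-3)] by blast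
  then obtain P where QP: "vec3 x y w ** P = mat 1" and PQ: "P ** vec3 x y w = mat 1"
    using invertible_det_nz invertible_def by blast
  define B where "B = vec3 x y w ** A ** P"
  have B: "no_eigenvector B"
    unfolding B_def using no_eigenvector_conj[OF A QP] .
  have "u v* vec3 x y w v* P = u" for u
    using QP by (simp add: vector_matrix_mul_assoc)
  from this[of "vec3 1 0 0"] this[of "vec3 0 1 0"]
  have xy: "x v* P = vec3 1 0 0" "y v* P = vec3 0 1 0"
    by simp_all
  have "B$1 = (x v* A) v* P" "B$2 = (y v* A) v* P"
  proof -
    have "vec3 1 0 0 v* B = (vec3 1 0 0 v* vec3 x y w) v* A v* P"
      "vec3 0 1 0 v* B = (vec3 0 1 0 v* vec3 x y w) v* A v* P"
      unfolding B_def by (simp_all only: vector_matrix_mul_assoc matrix_mul_assoc)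
    then show "B$1 = (x v* A) v* P" "B$2 = (y v* A) v* P"
      by simp_all
  qed
  then have "B$1 = vec3 l m 0" "B$2 = vec3 l' m' 0"
    using assms(4,5) xy by (simp_all add: vector_matrix_left_distrib scalar_vector_matrix_assoc
        vec_eq_iff forall_3)
  then have "det (mat (B$3$3) - B) = 0"
    by (simp add: det_mat_minus_3)
  with B show False
    by (simp add: no_eigenvector_iff_det)
qed

lemma deranging_matrices_empty_if_invariant_line:
  fixes a b c d :: "'a::field^3"
  assumes "a \<noteq> 0" "c \<noteq> 0" "proj_point a \<noteq> proj_point c"
    and "det (vec3 a c b) = 0" "det (vec3 a c d) = 0"
  shows "deranging_matrices a b c d = {}"
proof -
  obtain l m l' m' where "b = l *s a + m *s c" "d = l' *s a + m' *s c"
    using linear_combination_if_det_vec3_eq_0 assms by metis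
  then have "\<not> no_eigenvector A" if "a v* A = k *s b" "c v* A = k' *s d" for A k k'
    using that
      not_no_eigenvector_if_invariant_plane[OF assms(1-3), of A "k * l" "k * m" "k' * l'" "k' * m'"]
    by (simp add: vector_add_ldistrib)
  then show ?thesis
    by (auto simp: deranging_matrices_def)
qed

lemma deranging_matrices_empty_if_fixed:
  fixes a b :: "'a::field^3"
  assumes "b \<noteq> 0" "proj_point a = proj_point b"
  shows "deranging_matrices a b c d = {}"
proof -
  obtain k' where "a \<noteq> 0" "a = k' *s b"
    using proj_point_eq_iff[OF assms(1)] assms(2) by blast
  then have "b = inverse k' *s a"
    by auto
  then have "\<not> no_eigenvector A" if "a v* A = k *s b" for A k
    using that \<open>a \<noteq> 0\<close> unfolding no_eigenvector_def by auto
  then show ?thesis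
    by (auto simp: deranging_matrices_def)
qed

lemma deranging_matrices_empty_if_same_image:
  fixes a b c :: "'a::field^3"
  assumes "a \<noteq> 0" "c \<noteq> 0" "proj_point a \<noteq> proj_point c"
  shows "deranging_matrices a b c b = {}"
proof -
  have "\<not> no_eigenvector A" if "a v* A = k *s b" "c v* A = k' *s b" for A k k'
  proof
    assume A: "no_eigenvector A"
    then have "k \<noteq> 0" "k' \<noteq> 0"
      using that assms(1,2) no_eigenvector_nonzero by force+
    have "(k' *s a - k *s c) v* A = 0"
      using that by (simp add: vector_matrix_mult_diff_distrib scalar_vector_matrix_assoc)
    then have "k' *s a = k *s c"
      using no_eigenvector_nonzero[OF A] by force
    then have "inverse k' *s (k' *s a) = inverse k' *s (k *s c)"
      by simp
    then have "a = (inverse k' * k) *s c"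
      using \<open>k' \<noteq> 0\<close> by simp
    then show False
      using proj_point_eq_iff assms by blast
  qed
  then show ?thesis
    by (auto simp: deranging_matrices_def)
qed

lemma Ncount_eqI:
  fixes a b c d :: "'a::{field,finite}^3"
  assumes "a \<noteq> 0" "b \<noteq> 0" "c \<noteq> 0" "d \<noteq> 0"
    and "card (deranging_matrices a b c d) = (CARD('a) - 1) * n"
  shows "Ncount (proj_point a) (proj_point b) (proj_point c) (proj_point d) = n"
  using card_deranging_matrices_eq_Ncount[OF assms(1-4)] assms(5) card_field_ge_2[where 'a = 'a]
  by simp

lemma Ncount_swap: "Ncount \<alpha> \<beta> \<gamma> \<delta> = Ncount \<gamma> \<delta> \<alpha> \<beta>"
  unfolding Ncount_def by (rule arg_cong[where f = card]) blast

lemma Ncount_inverse: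
  assumes "\<alpha> \<in> pg_points" "\<beta> \<in> pg_points" "\<gamma> \<in> pg_points" "\<delta> \<in> pg_points"
  shows "Ncount \<alpha> \<beta> \<gamma> \<delta> = Ncount \<beta> \<alpha> \<delta> \<gamma>"
proof -
  obtain a b c d :: "'a::{field,finite}^3" where nonzero: "a \<noteq> 0" "b \<noteq> 0" "c \<noteq> 0" "d \<noteq> 0"
    and points: "\<alpha> = proj_point a" "\<beta> = proj_point b" "\<gamma> = proj_point c" "\<delta> = proj_point d"
    using assms by (meson pg_points_iff)
  show ?thesis
    unfolding points
    by (rule sym, rule Ncount_eqI[OF nonzero(2,1,4,3)])
      (simp add: card_deranging_matrices_inverse[OF nonzero]
        card_deranging_matrices_eq_Ncount[OF nonzero])
qed

lemma Ncount_same_pair: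
  fixes \<alpha> \<beta> :: "('a::{field,finite}^3) set"
  assumes "\<alpha> \<in> pg_points" "\<beta> \<in> pg_points" "\<alpha> \<noteq> \<beta>"
  shows "Ncount \<alpha> \<beta> \<alpha> \<beta> = CARD('a)^2 * ((CARD('a) - 1) * card (rootless_cubics :: ('a \<times> 'a \<times> 'a) set))"
proof -
  obtain a b :: "'a^3" where nonzero: "a \<noteq> 0" "b \<noteq> 0"
    and points: "\<alpha> = proj_point a" "\<beta> = proj_point b"
    using assms(1,2) by (meson pg_points_iff)
  show ?thesis
    unfolding points
    by (rule Ncount_eqI[OF nonzero nonzero])
      (use card_deranging_matrices_pair[OF nonzero] assms(3) points
        in \<open>simp add: power2_eq_square mult_ac\<close>)
qed

lemma Ncount_chain:
  fixes \<alpha> \<beta> \<gamma> :: "('a::{field,finite}^3) set"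
  assumes "\<alpha> \<in> pg_points" "\<beta> \<in> pg_points" "\<gamma> \<in> pg_points" "\<not> pg_collinear {\<alpha>, \<beta>, \<gamma>}"
  shows "Ncount \<alpha> \<beta> \<gamma> \<alpha> = (CARD('a) - 1) * card (rootless_cubics :: ('a \<times> 'a \<times> 'a) set)"
proof -
  obtain a b c :: "'a^3" where nonzero: "a \<noteq> 0" "b \<noteq> 0" "c \<noteq> 0"
    and points: "\<alpha> = proj_point a" "\<beta> = proj_point b" "\<gamma> = proj_point c"
    using assms(1-3) by (meson pg_points_iff)
  have "det (vec3 c a b) = det (vec3 a b c)"
    by (simp add: det_vec3 algebra_simps)
  then have "det (vec3 c a b) \<noteq> 0"
    using assms(4) pg_collinear_proj_point_iff[OF nonzero] points by simp
  then show ?thesis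
    unfolding points
    by (intro Ncount_eqI[OF nonzero nonzero(1)])
      (simp add: card_deranging_matrices_chain power2_eq_square)
qed

lemma Ncount_collinear_triple:
  fixes \<alpha> \<beta> \<gamma> \<delta> :: "('a::{field,finite}^3) set"
  assumes "\<alpha> \<in> pg_points" "\<beta> \<in> pg_points" "\<gamma> \<in> pg_points" "\<delta> \<in> pg_points"
    and "\<alpha> \<noteq> \<beta>" "\<alpha> \<noteq> \<gamma>" "\<beta> \<noteq> \<gamma>" "pg_collinear {\<alpha>, \<beta>, \<gamma>}" "\<not> pg_collinear {\<alpha>, \<beta>, \<delta>}"
  shows "Ncount \<alpha> \<beta> \<gamma> \<delta> = (CARD('a) - 1) * card (rootless_cubics :: ('a \<times> 'a \<times> 'a) set)"
proof -
  obtain a b c d :: "'a^3" where nonzero: "a \<noteq> 0" "b \<noteq> 0" "c \<noteq> 0" "d \<noteq> 0"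
    and points: "\<alpha> = proj_point a" "\<beta> = proj_point b" "\<gamma> = proj_point c" "\<delta> = proj_point d"
    using assms(1-4) by (meson pg_points_iff)
  have "det (vec3 a b c) = 0" "det (vec3 a b d) \<noteq> 0"
    using assms(8,9) pg_collinear_proj_point_iff nonzero unfolding points by blast+
  then obtain l m where c: "c = l *s a + m *s b"
    using linear_combination_if_det_vec3_eq_0 nonzero assms(5) unfolding points by blast
  have "l \<noteq> 0"
  proof
    assume "l = 0"
    with c nonzero(3) have "proj_point c = proj_point b"
      by (auto simp: proj_point_eq_iff[OF nonzero(2)])
    with assms(7) show False
      unfolding points by simp
  qed
  moreover have "m \<noteq> 0"
  proof
    assume "m = 0"
    with c nonzero(3) have "proj_point c = proj_point a"
      by (auto simp: proj_point_eq_iff[OF nonzero(1)])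
    with assms(6) show False
      unfolding points by simp
  qed
  ultimately show ?thesis
    unfolding points
    by (intro Ncount_eqI[OF nonzero])
      (simp add: card_deranging_matrices_collinear[OF c] \<open>det (vec3 a b d) \<noteq> 0\<close> power2_eq_square)
qed

lemma Ncount_general_position:
  fixes \<alpha> \<beta> \<gamma> \<delta> :: "('a::{field,finite}^3) set"
  assumes "\<alpha> \<in> pg_points" "\<beta> \<in> pg_points" "\<gamma> \<in> pg_points" "\<delta> \<in> pg_points"
    and "\<not> pg_collinear {\<alpha>, \<beta>, \<gamma>}" "\<not> pg_collinear {\<alpha>, \<beta>, \<delta>}"
      "\<not> pg_collinear {\<alpha>, \<gamma>, \<delta>}" "\<not> pg_collinear {\<beta>, \<gamma>, \<delta>}"
  shows "Ncount \<alpha> \<beta> \<gamma> \<delta> = (CARD('a) - 2) * card (rootless_cubics :: ('a \<times> 'a \<times> 'a) set)"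
proof -
  obtain a b c d :: "'a^3" where nonzero: "a \<noteq> 0" "b \<noteq> 0" "c \<noteq> 0" "d \<noteq> 0"
    and points: "\<alpha> = proj_point a" "\<beta> = proj_point b" "\<gamma> = proj_point c" "\<delta> = proj_point d"
    using assms(1-4) by (meson pg_points_iff)
  have "det (vec3 a b c) \<noteq> 0" "det (vec3 a b d) \<noteq> 0" "det (vec3 a c d) \<noteq> 0" "det (vec3 b c d) \<noteq> 0"
    using assms(5-8) pg_collinear_proj_point_iff nonzero unfolding points by blast+
  then show ?thesis
    unfolding points
    by (intro Ncount_eqI[OF nonzero]) (simp add: card_deranging_matrices_general)
qed

lemma Ncount_eq_0:
  fixes \<alpha> \<beta> \<gamma> \<delta> :: "('a::{field,finite}^3) set"
  assumes "\<alpha> \<in> pg_points" "\<beta> \<in> pg_points" "\<gamma> \<in> pg_points" "\<delta> \<in> pg_points"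
    and "\<alpha> = \<beta> \<or> \<gamma> = \<delta> \<or> (\<alpha> = \<gamma> \<and> \<beta> \<noteq> \<delta>) \<or> (\<beta> = \<delta> \<and> \<alpha> \<noteq> \<gamma>)
      \<or> (\<alpha> \<noteq> \<gamma> \<and> pg_collinear {\<alpha>, \<beta>, \<gamma>, \<delta>})"
  shows "Ncount \<alpha> \<beta> \<gamma> \<delta> = 0"
proof -
  obtain a b c d :: "'a^3" where nonzero: "a \<noteq> 0" "b \<noteq> 0" "c \<noteq> 0" "d \<noteq> 0"
    and points: "\<alpha> = proj_point a" "\<beta> = proj_point b" "\<gamma> = proj_point c" "\<delta> = proj_point d"
    using assms(1-4) by (meson pg_points_iff)
  have zero: "Ncount (proj_point x) (proj_point y) (proj_point z) (proj_point w) = 0"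
    if "x \<noteq> 0" "y \<noteq> 0" "z \<noteq> 0" "w \<noteq> 0" "deranging_matrices x y z w = {}" for x y z w :: "'a^3"
    using Ncount_eqI[OF that(1-4), of 0] that(5) by simp
  from assms(5) show ?thesis
  proof (elim disjE conjE)
    assume "\<alpha> = \<beta>"
    then have "deranging_matrices a b c d = {}"
      using deranging_matrices_empty_if_fixed[OF nonzero(2)] points by simp
    then show ?thesis
      using zero[OF nonzero] points by simp
  next
    assume "\<gamma> = \<delta>"
    then have "deranging_matrices c d a b = {}"
      using deranging_matrices_empty_if_fixed[OF nonzero(4)] points by simp
    then have "Ncount \<gamma> \<delta> \<alpha> \<beta> = 0"
      using zero[OF nonzero(3,4,1,2)] points by simp
    then show ?thesis
      using Ncount_swap[of \<alpha> \<beta> \<gamma> \<delta>] by simp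
  next
    assume "\<alpha> = \<gamma>" "\<beta> \<noteq> \<delta>"
    then show ?thesis
      unfolding Ncount_def by auto
  next
    assume "\<beta> = \<delta>" "\<alpha> \<noteq> \<gamma>"
    then have "deranging_matrices a b c b = {}"
      using deranging_matrices_empty_if_same_image[OF nonzero(1,3)] points by simp
    then have "Ncount \<alpha> \<beta> \<gamma> \<beta> = 0"
      using zero[OF nonzero(1-3,2)] unfolding points by simp
    with \<open>\<beta> = \<delta>\<close> show ?thesis
      by simp
  next
    assume "\<alpha> \<noteq> \<gamma>" and collinear: "pg_collinear {\<alpha>, \<beta>, \<gamma>, \<delta>}"
    have "pg_collinear {\<alpha>, \<gamma>, \<beta>}" "pg_collinear {\<alpha>, \<gamma>, \<delta>}"
      using collinear by (auto elim: pg_collinear_subset)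
    then have "det (vec3 a c b) = 0" "det (vec3 a c d) = 0"
      using pg_collinear_proj_point_iff nonzero unfolding points by blast+
    with \<open>\<alpha> \<noteq> \<gamma>\<close> have "deranging_matrices a b c d = {}"
      using deranging_matrices_empty_if_invariant_line[OF nonzero(1,3)] points by simp
    then show ?thesis
      using zero[OF nonzero] points by simp
  qed
qed

lemma Ncount_exactly_three_collinear:
  fixes \<alpha> \<beta> \<gamma> \<delta> :: "('a::{field,finite}^3) set"
  assumes "\<alpha> \<in> pg_points" "\<beta> \<in> pg_points" "\<gamma> \<in> pg_points" "\<delta> \<in> pg_points"
    and "distinct [\<alpha>, \<beta>, \<gamma>, \<delta>]"
    and "pg_collinear {\<alpha>, \<beta>, \<gamma>} \<or> pg_collinear {\<alpha>, \<beta>, \<delta>} \<or> pg_collinear {\<alpha>, \<gamma>, \<delta>}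
      \<or> pg_collinear {\<beta>, \<gamma>, \<delta>}"
    and "\<not> pg_collinear {\<alpha>, \<beta>, \<gamma>, \<delta>}"
  shows "Ncount \<alpha> \<beta> \<gamma> \<delta> = (CARD('a) - 1) * card (rootless_cubics :: ('a \<times> 'a \<times> 'a) set)"
proof -
  have other_triple: "\<not> pg_collinear {x, y, w}"
    if "{x, y, z, w} = {\<alpha>, \<beta>, \<gamma>, \<delta>}" "x \<in> pg_points" "y \<in> pg_points" "z \<in> pg_points"
      "w \<in> pg_points" "x \<noteq> y" "pg_collinear {x, y, z}" for x y z w
    using pg_collinear_4I[OF that(2-6)] that(1,7) assms(7) by auto
  have distinct: "\<alpha> \<noteq> \<beta>" "\<alpha> \<noteq> \<gamma>" "\<alpha> \<noteq> \<delta>" "\<beta> \<noteq> \<gamma>" "\<beta> \<noteq> \<delta>" "\<gamma> \<noteq> \<delta>"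
    using assms(5) by auto
  note collinear = Ncount_collinear_triple[OF assms(1-4)] Ncount_collinear_triple[OF assms(2,1,4,3)]
    Ncount_collinear_triple[OF assms(3,4,1,2)] Ncount_collinear_triple[OF assms(4,3,2,1)]
  note inverse = Ncount_inverse[OF assms(1-4)] Ncount_inverse[OF assms(3,4,1,2)]
  \<comment> \<open>the symmetries of Ncount move the collinear triple to the first three arguments\<close>
  consider "pg_collinear {\<alpha>, \<beta>, \<gamma>}" | "pg_collinear {\<beta>, \<alpha>, \<delta>}" | "pg_collinear {\<gamma>, \<delta>, \<alpha>}"
    | "pg_collinear {\<delta>, \<gamma>, \<beta>}"
    using assms(6) by (auto simp: insert_commute)
  then show ?thesis
  proof cases
    case 1
    then show ?thesis
      using collinear(1) other_triple[of \<alpha> \<beta> \<gamma> \<delta>] assms(1-4) distinct by auto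
  next
    case 2
    then show ?thesis
      using collinear(2) other_triple[of \<beta> \<alpha> \<delta> \<gamma>] assms(1-4) distinct inverse
      by (auto simp: insert_commute)
  next
    case 3
    then show ?thesis
      using collinear(3) other_triple[of \<gamma> \<delta> \<alpha> \<beta>] assms(1-4) distinct Ncount_swap[of \<alpha> \<beta> \<gamma> \<delta>]
      by (auto simp: insert_commute)
  next
    case 4
    then show ?thesis
      using collinear(4) other_triple[of \<delta> \<gamma> \<beta> \<alpha>] assms(1-4) distinct inverse
        Ncount_swap[of \<alpha> \<beta> \<gamma> \<delta>]
      by (auto simp: insert_commute)
  qed
qed

lemma Ncount_chain_either_side:
  fixes \<alpha> \<beta> \<gamma> \<delta> :: "('a::{field,finite}^3) set"
  assumes "\<alpha> \<in> pg_points" "\<beta> \<in> pg_points" "\<gamma> \<in> pg_points" "\<delta> \<in> pg_points"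
    and "\<alpha> = \<delta> \<or> \<beta> = \<gamma>" "\<not> pg_collinear {\<alpha>, \<beta>, \<gamma>, \<delta>}"
  shows "Ncount \<alpha> \<beta> \<gamma> \<delta> = (CARD('a) - 1) * card (rootless_cubics :: ('a \<times> 'a \<times> 'a) set)"
  using assms(5)
proof
  assume "\<alpha> = \<delta>"
  then have "{\<alpha>, \<beta>, \<gamma>, \<delta>} = {\<alpha>, \<beta>, \<gamma>}"
    by auto
  with \<open>\<alpha> = \<delta>\<close> show ?thesis
    using Ncount_chain[OF assms(1-3)] assms(6) by simp
next
  assume "\<beta> = \<gamma>"
  then have "{\<alpha>, \<beta>, \<gamma>, \<delta>} = {\<beta>, \<delta>, \<alpha>}"
    by auto
  then have "\<not> pg_collinear {\<beta>, \<delta>, \<alpha>}"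
    using assms(6) by simp
  with \<open>\<beta> = \<gamma>\<close> show ?thesis
    using Ncount_chain[OF assms(2,4,1)] Ncount_swap[of \<alpha> \<beta> \<gamma> \<delta>] by simp
qed

theorem mainTheorem8:
  fixes \<alpha> \<beta> \<gamma> \<delta> :: "('a::{finite,field} ^ 3) set"
  assumes "\<alpha> \<in> pg_points" "\<beta> \<in> pg_points" "\<gamma> \<in> pg_points" "\<delta> \<in> pg_points"
  defines "q \<equiv> CARD('a)"
  defines "u \<equiv> (q - 2) * q * (q^2 - 1) div 3"
  defines "v \<equiv> (q - 1) * q * (q^2 - 1) div 3"
  shows "Ncount \<alpha> \<beta> \<gamma> \<delta> =
    (if \<alpha> \<noteq> \<beta> \<and> \<alpha> = \<gamma> \<and> \<beta> = \<delta> then q^2 * v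
     else if distinct [\<alpha>, \<beta>, \<gamma>, \<delta>]
          \<and> (pg_collinear {\<alpha>, \<beta>, \<gamma>} \<or> pg_collinear {\<alpha>, \<beta>, \<delta>}
             \<or> pg_collinear {\<alpha>, \<gamma>, \<delta>} \<or> pg_collinear {\<beta>, \<gamma>, \<delta>})
          \<and> \<not> pg_collinear {\<alpha>, \<beta>, \<gamma>, \<delta>} then v
     else if (\<alpha> = \<delta> \<or> \<beta> = \<gamma>) \<and> \<not> pg_collinear {\<alpha>, \<beta>, \<gamma>, \<delta>} then v
     else if \<not> pg_collinear {\<alpha>, \<beta>, \<gamma>} \<and> \<not> pg_collinear {\<alpha>, \<beta>, \<delta>}
          \<and> \<not> pg_collinear {\<alpha>, \<gamma>, \<delta>} \<and> \<not> pg_collinear {\<beta>, \<gamma>, \<delta>} then u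
     else 0)"
proof -
  let ?R = "card (rootless_cubics :: ('a \<times> 'a \<times> 'a) set)"
  have "q * (q^2 - 1) = 3 * ?R"
    using card_rootless_cubics[where 'a = 'a]
    by (simp add: q_def power2_eq_square power3_eq_cube diff_mult_distrib2)
  then have v: "v = (q - 1) * ?R" and u: "u = (q - 2) * ?R"
    unfolding u_def v_def by (simp_all add: mult.assoc)
  define pair where "pair \<longleftrightarrow> \<alpha> \<noteq> \<beta> \<and> \<alpha> = \<gamma> \<and> \<beta> = \<delta>"
  define three where "three \<longleftrightarrow> distinct [\<alpha>, \<beta>, \<gamma>, \<delta>]
    \<and> (pg_collinear {\<alpha>, \<beta>, \<gamma>} \<or> pg_collinear {\<alpha>, \<beta>, \<delta>} \<or> pg_collinear {\<alpha>, \<gamma>, \<delta>}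
       \<or> pg_collinear {\<beta>, \<gamma>, \<delta>}) \<and> \<not> pg_collinear {\<alpha>, \<beta>, \<gamma>, \<delta>}"
  define chain where "chain \<longleftrightarrow> (\<alpha> = \<delta> \<or> \<beta> = \<gamma>) \<and> \<not> pg_collinear {\<alpha>, \<beta>, \<gamma>, \<delta>}"
  define general where "general \<longleftrightarrow> \<not> pg_collinear {\<alpha>, \<beta>, \<gamma>} \<and> \<not> pg_collinear {\<alpha>, \<beta>, \<delta>}
    \<and> \<not> pg_collinear {\<alpha>, \<gamma>, \<delta>} \<and> \<not> pg_collinear {\<beta>, \<gamma>, \<delta>}"
  have "Ncount \<alpha> \<beta> \<gamma> \<delta> = q^2 * v" if pair
    using that Ncount_same_pair[OF assms(1,2)] by (auto simp: pair_def v q_def)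
  moreover have "Ncount \<alpha> \<beta> \<gamma> \<delta> = v" if three
    using that Ncount_exactly_three_collinear[OF assms(1-4)] by (simp add: three_def v q_def)
  moreover have "Ncount \<alpha> \<beta> \<gamma> \<delta> = v" if chain
    using that Ncount_chain_either_side[OF assms(1-4)] by (simp add: chain_def v q_def)
  moreover have "Ncount \<alpha> \<beta> \<gamma> \<delta> = u" if general
    using that Ncount_general_position[OF assms(1-4)] by (simp add: general_def u q_def)
  moreover have "Ncount \<alpha> \<beta> \<gamma> \<delta> = 0" if "\<not> pair" "\<not> three" "\<not> chain" "\<not> general"
    using that
    by (intro Ncount_eq_0[OF assms(1-4)]) (auto simp: pair_def three_def chain_def general_def)
  ultimately show ?thesis
    unfolding pair_def[symmetric] three_def[symmetric] chain_def[symmetric] general_def[symmetric]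
    by simp
qed

end
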